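(* A puzzle $p\colon G(J)\to D'(K)$ is realizable if and only if all of its subcubes are realizable.
   Context: Let $R\in\{\mathbb Z,\mathbb Z_2\}$; an $R$-basis of $R^n$ is a $\mathbb Z$-basis of $\mathbb Z^n$ ($R=\mathbb Z$) or a basis of $\mathbb Z_2^n$ ($R=\mathbb Z_2$). $K$ is an $(n-1)$-dimensional star-shaped simplicial sphere on $[m]$. An $R$-characteristic map over a complex with $(N-1)$-dimensional facets is a map from its vertices to $R^N$ sending each $(N-1)$-face to an $R$-basis; D-J equivalence is equality up to left multiplication by $GL_N(R)$. For a face $\sigma$, $\operatorname{proj}_\sigma\lambda$ is the characteristic map on $\operatorname{link}\sigma$ given by $w\mapsto[\lambda(w)]\in R^N/\langle\lambda(u):u\in\sigma\rangle$. For $J=(j_1,\dots,j_m)\in\mathbb Z_{>0}^m$, $K(J)$ is the complex on vertices $\{i_k:1\le i\le m,1\le k\le j_i\}$ whose minimal non-faces are $\bigcup_{i\in\tau}\{i_1,\dots,i_{j_i}\}$ for $\tau$ a minimal non-face of $K$; $\operatorname{wed}_vK=K(J)$ with $j_v=2$, other $j_i=1$. $I(J)=\{\boldsymbol\alpha:1\le\alpha_i\le j_i\}$; $\sigma(\boldsymbol\alpha)$ is the set of all vertices of $K(J)$ except $1_{\alpha_1},\dots,m_{\alpha_m}$, a face whose link is identified with $K$ via $i_{\alpha_i}\mapsto i$. The pre-diagram $D'(K)$: vertices are D-J classes of $R$-characteristic maps over $K$; an edge colored $v$ joins $\lambda_1,\lambda_2$ iff some $R$-characteristic map $\Lambda$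 over $\operatorname{wed}_vK$ has $\operatorname{proj}_{v_1}\Lambda=\lambda_1$, $\operatorname{proj}_{v_2}\Lambda=\lambda_2$ (links of $v_1,v_2$ identified with $K$ by sending the other of $v_1,v_2$ to $v$). $G(J)$ is the $1$-skeleton of $\prod_i\Delta^{j_i-1}$ with vertex set $I(J)$, edges joining vertices differing in exactly one coordinate $v$, colored $v$. A puzzle of $(K,J)$ is a color-preserving graph homomorphism $G(J)\to D'(K)$; it is realizable if it equals $\boldsymbol\alpha\mapsto\operatorname{proj}_{\sigma(\boldsymbol\alpha)}\Lambda$ for some $R$-characteristic map $\Lambda$ over $K(J)$. For nonempty $S_i\subseteq[j_i]$, the restriction of a puzzle to the induced subgraph on $\prod_i S_i$, identified with $G(J')$, $j'_i=|S_i|$, via order-preserving bijections, is a subpuzzle (a puzzle of $(K,J')$); it is a subcube if all $|S_i|\le 2$. *)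

theory Defs
  imports Complex_Main "HOL-Library.FuncSet" "HOL-Library.Z2"
begin

(* R^N is represented by functions nat => 'r vanishing at indices >= N.
   R = Z is the type int, R = Z_2 is the type bit (HOL-Library.Z2). *)

definition vecs :: "nat \<Rightarrow> (nat \<Rightarrow> 'r::zero) set" where
  "vecs N = {x. \<forall>i\<ge>N. x i = 0}"

definition lincomb :: "'a set \<Rightarrow> ('a \<Rightarrow> 'r::comm_ring_1) \<Rightarrow> ('a \<Rightarrow> nat \<Rightarrow> 'r) \<Rightarrow> nat \<Rightarrow> 'r" where
  "lincomb B c b = (\<lambda>r. \<Sum>a\<in>B. c a * b a r)"

definition is_basis :: "nat \<Rightarrow> 'a set \<Rightarrow> ('a \<Rightarrow> nat \<Rightarrow> 'r::comm_ring_1) \<Rightarrow> bool" where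
  "is_basis N B b \<longleftrightarrow> finite B \<and> (\<forall>a\<in>B. b a \<in> vecs N) \<and>
     (\<forall>x\<in>vecs N. \<exists>!c. (\<forall>a. a \<notin> B \<longrightarrow> c a = 0) \<and> x = lincomb B c b)"

definition rspan :: "'a set \<Rightarrow> ('a \<Rightarrow> nat \<Rightarrow> 'r::comm_ring_1) \<Rightarrow> (nat \<Rightarrow> 'r) set" where
  "rspan B b = {lincomb B c b | c. True}"

(* R-linear maps R^N -> R^n, given by n x N matrices *)
definition lin_maps :: "nat \<Rightarrow> nat \<Rightarrow> (nat \<Rightarrow> nat \<Rightarrow> 'r::comm_ring_1) set" where
  "lin_maps N n = {A. \<forall>r c. (n \<le> r \<or> N \<le> c) \<longrightarrow> A r c = 0}"

definition matapp :: "nat \<Rightarrow> (nat \<Rightarrow> nat \<Rightarrow> 'r::comm_ring_1) \<Rightarrow> (nat \<Rightarrow> 'r) \<Rightarrow> nat \<Rightarrow> 'r" where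
  "matapp N A x = (\<lambda>r. \<Sum>c<N. A r c * x c)"

definition simplicial_complex_on :: "'v set \<Rightarrow> 'v set set \<Rightarrow> bool" where
  "simplicial_complex_on V L \<longleftrightarrow> finite V \<and> L \<subseteq> Pow V \<and> {} \<in> L \<and>
     (\<forall>F\<in>L. \<forall>G. G \<subseteq> F \<longrightarrow> G \<in> L) \<and> (\<forall>v\<in>V. {v} \<in> L)"

definition min_nonfaces :: "'v set \<Rightarrow> 'v set set \<Rightarrow> 'v set set" where
  "min_nonfaces V L = {\<tau>. \<tau> \<subseteq> V \<and> \<tau> \<notin> L \<and> (\<forall>v\<in>\<tau>. \<tau> - {v} \<in> L)}"

definition pos_cone :: "(nat \<Rightarrow> nat \<Rightarrow> real) \<Rightarrow> nat set \<Rightarrow> (nat \<Rightarrow> real) set" where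
  "pos_cone w \<sigma> = {(\<lambda>r. \<Sum>i\<in>\<sigma>. c i * w i r) | c. \<forall>i\<in>\<sigma>. 0 \<le> c i}"

(* K is an (n-1)-dimensional star-shaped simplicial sphere on [m]:
   a pure (n-1)-dimensional simplicial complex on {1..m} which is the underlying
   complex of a complete simplicial fan in R^n *)
definition star_shaped_sphere :: "nat \<Rightarrow> nat \<Rightarrow> nat set set \<Rightarrow> bool" where
  "star_shaped_sphere m n K \<longleftrightarrow> simplicial_complex_on {1..m} K \<and>
     (\<forall>\<sigma>\<in>K. \<exists>F\<in>K. \<sigma> \<subseteq> F \<and> card F = n) \<and> (\<forall>\<sigma>\<in>K. card \<sigma> \<le> n) \<and>
     (\<exists>w::nat \<Rightarrow> nat \<Rightarrow> real.
        (\<forall>i\<in>{1..m}. w i \<in> vecs n) \<and>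
        (\<forall>\<sigma>\<in>K. \<forall>c. (\<lambda>r. \<Sum>i\<in>\<sigma>. c i * w i r) = (\<lambda>r. 0) \<longrightarrow> (\<forall>i\<in>\<sigma>. c i = 0)) \<and>
        (\<Union>\<sigma>\<in>K. pos_cone w \<sigma>) = vecs n \<and>
        (\<forall>\<sigma>\<in>K. \<forall>\<tau>\<in>K. pos_cone w \<sigma> \<inter> pos_cone w \<tau> = pos_cone w (\<sigma> \<inter> \<tau>)))"

definition char_map :: "'v set set \<Rightarrow> 'v set \<Rightarrow> nat \<Rightarrow> ('v \<Rightarrow> nat \<Rightarrow> 'r::comm_ring_1) \<Rightarrow> bool" where
  "char_map L V N lam \<longleftrightarrow> (\<forall>v\<in>V. lam v \<in> vecs N) \<and> (\<forall>F\<in>L. card F = N \<longrightarrow> is_basis N F lam)"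

(* K(J): vertex i_k is the pair (i,k) *)
definition KJ_verts :: "nat \<Rightarrow> (nat \<Rightarrow> nat) \<Rightarrow> (nat \<times> nat) set" where
  "KJ_verts m J = (SIGMA i:{1..m}. {1..J i})"

definition KJ :: "nat set set \<Rightarrow> nat \<Rightarrow> (nat \<Rightarrow> nat) \<Rightarrow> (nat \<times> nat) set set" where
  "KJ K m J = {S. S \<subseteq> KJ_verts m J \<and>
      (\<forall>\<tau>\<in>min_nonfaces {1..m} K. \<not> (SIGMA i:\<tau>. {1..J i}) \<subseteq> S)}"

(* dimension N' of the ambient lattice of K(J): |vertices| - m + n *)
definition dimJ :: "nat \<Rightarrow> nat \<Rightarrow> (nat \<Rightarrow> nat) \<Rightarrow> nat" where
  "dimJ m n J = n + (\<Sum>i=1..m. J i - 1)"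

definition I_J :: "nat \<Rightarrow> (nat \<Rightarrow> nat) \<Rightarrow> (nat \<Rightarrow> nat) set" where
  "I_J m J = PiE {1..m} (\<lambda>i. {1..J i})"

definition sigma_face :: "nat \<Rightarrow> (nat \<Rightarrow> nat) \<Rightarrow> (nat \<Rightarrow> nat) \<Rightarrow> (nat \<times> nat) set" where
  "sigma_face m J \<alpha> = KJ_verts m J - {(i, \<alpha> i) | i. i \<in> {1..m}}"

(* mu (a characteristic map over K, vertices 1..m, in R^n) represents the D-J class of
   proj_{sigma(alpha)} Lambda, with link sigma(alpha) identified with K via i_{alpha_i} -> i:
   there is a surjective R-linear map R^N' -> R^n with kernel the span of
   Lambda(sigma(alpha)) (i.e. an identification of the quotient with R^n) sending
   Lambda(i_{alpha_i}) to mu(i). *)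
definition proj_rep :: "nat \<Rightarrow> nat \<Rightarrow> (nat \<Rightarrow> nat) \<Rightarrow> (nat \<times> nat \<Rightarrow> nat \<Rightarrow> 'r::comm_ring_1)
     \<Rightarrow> (nat \<Rightarrow> nat) \<Rightarrow> (nat \<Rightarrow> nat \<Rightarrow> 'r) \<Rightarrow> bool" where
  "proj_rep m n J \<Lambda> \<alpha> \<mu> \<longleftrightarrow>
     (\<exists>A\<in>lin_maps (dimJ m n J) n.
        matapp (dimJ m n J) A ` vecs (dimJ m n J) = vecs n \<and>
        {x \<in> vecs (dimJ m n J). matapp (dimJ m n J) A x = (\<lambda>r. 0)}
           = rspan (sigma_face m J \<alpha>) \<Lambda> \<and>
        (\<forall>i\<in>{1..m}. \<mu> i = matapp (dimJ m n J) A (\<Lambda> (i, \<alpha> i))))"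

(* J for wed_v K *)
definition wedgeJ :: "nat \<Rightarrow> nat \<Rightarrow> nat" where
  "wedgeJ v = (\<lambda>i. if i = v then 2 else 1)"

(* edge of colour v in the pre-diagram D'(K) between the classes of mu1, mu2 *)
definition Dedge :: "nat set set \<Rightarrow> nat \<Rightarrow> nat \<Rightarrow> nat \<Rightarrow> (nat \<Rightarrow> nat \<Rightarrow> 'r::comm_ring_1)
     \<Rightarrow> (nat \<Rightarrow> nat \<Rightarrow> 'r) \<Rightarrow> bool" where
  "Dedge K m n v \<mu>1 \<mu>2 \<longleftrightarrow>
     (\<exists>\<Lambda>. char_map (KJ K m (wedgeJ v)) (KJ_verts m (wedgeJ v)) (dimJ m n (wedgeJ v)) \<Lambda> \<and>
        proj_rep m n (wedgeJ v) \<Lambda> (restrict (\<lambda>i. if i = v then 2 else 1) {1..m}) \<mu>1 \<and>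
        proj_rep m n (wedgeJ v) \<Lambda> (restrict (\<lambda>i. 1) {1..m}) \<mu>2)"

definition adjacent :: "nat \<Rightarrow> nat \<Rightarrow> (nat \<Rightarrow> nat) \<Rightarrow> (nat \<Rightarrow> nat) \<Rightarrow> bool" where
  "adjacent m v \<alpha> \<beta> \<longleftrightarrow> v \<in> {1..m} \<and> \<alpha> v \<noteq> \<beta> v \<and> (\<forall>i\<in>{1..m}. i \<noteq> v \<longrightarrow> \<alpha> i = \<beta> i)"

(* a puzzle of (K,J): p alpha is a representative of the D-J class assigned to alpha *)
definition puzzle :: "nat set set \<Rightarrow> nat \<Rightarrow> nat \<Rightarrow> (nat \<Rightarrow> nat)
     \<Rightarrow> ((nat \<Rightarrow> nat) \<Rightarrow> nat \<Rightarrow> nat \<Rightarrow> 'r::comm_ring_1) \<Rightarrow> bool" where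
  "puzzle K m n J p \<longleftrightarrow> (\<forall>\<alpha>\<in>I_J m J. char_map K {1..m} n (p \<alpha>)) \<and>
     (\<forall>\<alpha>\<in>I_J m J. \<forall>\<beta>\<in>I_J m J. \<forall>v. adjacent m v \<alpha> \<beta> \<longrightarrow> Dedge K m n v (p \<alpha>) (p \<beta>))"

definition realizable :: "nat set set \<Rightarrow> nat \<Rightarrow> nat \<Rightarrow> (nat \<Rightarrow> nat)
     \<Rightarrow> ((nat \<Rightarrow> nat) \<Rightarrow> nat \<Rightarrow> nat \<Rightarrow> 'r::comm_ring_1) \<Rightarrow> bool" where
  "realizable K m n J p \<longleftrightarrow>
     (\<exists>\<Lambda>. char_map (KJ K m J) (KJ_verts m J) (dimJ m n J) \<Lambda> \<and>
        (\<forall>\<alpha>\<in>I_J m J. proj_rep m n J \<Lambda> \<alpha> (p \<alpha>)))"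

definition ord_emb :: "nat set \<Rightarrow> nat \<Rightarrow> nat" where
  "ord_emb S k = sorted_list_of_set S ! (k - 1)"

(* the restriction of p to prod_i S_i, viewed as a puzzle of (K,J'), J'_i = |S_i| *)
definition subpuzzle :: "nat \<Rightarrow> (nat \<Rightarrow> nat set) \<Rightarrow> ((nat \<Rightarrow> nat) \<Rightarrow> 'a) \<Rightarrow> (nat \<Rightarrow> nat) \<Rightarrow> 'a" where
  "subpuzzle m S p = (\<lambda>\<beta>. p (restrict (\<lambda>i. ord_emb (S i) (\<beta> i)) {1..m}))"

end

theory Submission
  imports Defs
begin

text \<open>
Fix a base point \<beta> of I(J). Up to D-J equivalence a characteristic map \<Lambda> over K(J)
can be normalised so that the vertices u of \<sigma>(\<beta>) go to standard basis vectors e(u)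
and the vertex i_(\<beta> i) goes to p(\<beta>)(i) + \<Sum>u c(u,i) e(u). Each projection of \<Lambda> is
determined, up to D-J equivalence, by its module of linear relations among the images of
1..m; at \<alpha> this module is the relation module of p(\<beta>) twisted by the coefficient rows
c(j_(\<alpha> j), -) of the coordinates j in which \<alpha> differs from \<beta>. Conversely, any coefficient
system that reproduces the relation modules of all p(\<alpha>) defines such a normalised
realization. The row of a single vertex j_k is determined, on the relations of p(\<beta>), by
the relation module at the neighbour of \<beta> in direction j alone. Hence the coefficient
systems extracted from realizations of the subcubes spanned by \<beta> and each \<alpha> agree, and
glue to a coefficient system for the whole puzzle.
\<close>

section \<open>Linear algebra over a commutative ring\<close>

lemma vecs_sum: "(\<forall>t\<in>T. v t \<in> vecs N) \<Longrightarrow> (\<lambda>r. \<Sum>t\<in>T. a t * (v t r :: 'r::comm_ring_1)) \<in> vecs N"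
  by (auto simp: vecs_def intro!: sum.neutral)

lemma lincomb_vecs: "(\<forall>t\<in>T. v t \<in> vecs N) \<Longrightarrow> lincomb T c (v :: _ \<Rightarrow> nat \<Rightarrow> 'r::comm_ring_1) \<in> vecs N"
  unfolding lincomb_def by (rule vecs_sum)

lemma vecsD: "x \<in> vecs N \<Longrightarrow> N \<le> i \<Longrightarrow> x i = 0"
  by (auto simp: vecs_def)

lemma zero_vecs: "(\<lambda>r. 0) \<in> vecs N"
  unfolding vecs_def by auto

lemma rspan_gen: "finite B \<Longrightarrow> t \<in> B \<Longrightarrow> (b t :: nat \<Rightarrow> 'r::comm_ring_1) \<in> rspan B b"
  unfolding rspan_def lincomb_def
  by (rule CollectI, rule exI[of _ "\<lambda>s. if s = t then 1 else 0"])
    (simp add: if_distrib[of "\<lambda>x. x * _"] cong: if_cong)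

lemma rspan_zero: "(\<lambda>r. 0 :: 'r::comm_ring_1) \<in> rspan B b"
  unfolding rspan_def lincomb_def by (auto intro!: exI[of _ "\<lambda>_. 0"])

lemma rspan_add: "x \<in> rspan B b \<Longrightarrow> y \<in> rspan B b \<Longrightarrow> (\<lambda>r. x r + y r :: 'r::comm_ring_1) \<in> rspan B b"
  unfolding rspan_def lincomb_def
  apply clarsimp
  subgoal for c d by (rule exI[of _ "\<lambda>s. c s + d s"]) (simp add: distrib_right sum.distrib)
  done

lemma rspan_smult: "x \<in> rspan B b \<Longrightarrow> (\<lambda>r. a * x r :: 'r::comm_ring_1) \<in> rspan B b"
  unfolding rspan_def lincomb_def
  apply clarsimp
  subgoal for c by (rule exI[of _ "\<lambda>s. a * c s"]) (simp add: sum_distrib_left mult.assoc)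
  done

lemma rspan_sum: "finite I \<Longrightarrow> (\<forall>i\<in>I. f i \<in> rspan B b) \<Longrightarrow> (\<lambda>r. \<Sum>i\<in>I. f i r :: 'r::comm_ring_1) \<in> rspan B b"
proof (induction I rule: finite_induct)
  case empty thus ?case using rspan_zero by simp
next
  case (insert x F)
  then show ?case using rspan_add[of "f x" B b "\<lambda>r. \<Sum>i\<in>F. f i r"] by simp
qed

lemma rspan_lincomb: "finite B \<Longrightarrow> finite I \<Longrightarrow> (\<forall>i\<in>I. g i \<in> B) \<Longrightarrow>
   (\<lambda>r. \<Sum>i\<in>I. a i * b (g i) r :: 'r::comm_ring_1) \<in> rspan B b"
  by (rule rspan_sum) (auto intro: rspan_smult rspan_gen)

lemma rspan_diff: "x \<in> rspan B b \<Longrightarrow> y \<in> rspan B b \<Longrightarrow> (\<lambda>r. x r - y r :: 'r::comm_ring_1) \<in> rspan B b"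
  using rspan_add[of x B b "\<lambda>r. (-1) * y r"] rspan_smult[of y B b "-1"] by simp

lemma rspan_vecs: "(\<forall>t\<in>B. b t \<in> vecs N) \<Longrightarrow> x \<in> rspan B (b :: _ \<Rightarrow> nat \<Rightarrow> 'r::comm_ring_1) \<Longrightarrow> x \<in> vecs N"
  unfolding rspan_def using lincomb_vecs by blast

lemma is_basis_finite: "is_basis N G b \<Longrightarrow> finite G"
  unfolding is_basis_def by simp

lemma is_basis_vecs: "is_basis N G b \<Longrightarrow> g \<in> G \<Longrightarrow> b g \<in> vecs N"
  unfolding is_basis_def by simp

lemma mult_indicator: "(x::'r::comm_ring_1) * (if P then 1 else 0) = (if P then x else 0)" by simp

lemma sum_if_sub: "finite S \<Longrightarrow> F \<subseteq> S \<Longrightarrow> (\<Sum>t\<in>S. (if t \<in> F then f t else 0)) = (\<Sum>t\<in>F. f t)"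
  by (simp add: sum.If_cases Int_absorb1)

lemma sum_split:
  assumes "finite S" "D \<subseteq> S"
  shows "(\<Sum>i\<in>S. g i) = (\<Sum>i\<in>D. g i) + (\<Sum>i\<in>S - D. g i :: 'r::comm_ring_1)"
  using sum.subset_diff[OF assms(2,1)] by (simp add: add.commute)

lemma sum_replace_subset:
  assumes "finite S" "D \<subseteq> S" "\<forall>i\<in>S - D. f i = g i"
  shows "(\<Sum>i\<in>S. f i) = (\<Sum>i\<in>D. f i) + (\<Sum>i\<in>S. g i) - (\<Sum>i\<in>D. g i :: 'r::comm_ring_1)"
  using sum_split[OF assms(1,2), of f] sum_split[OF assms(1,2), of g] assms(3) by simp

lemma sum_delta_minus:
  assumes "finite S" "i \<in> S" "F \<subseteq> S"
  shows "(\<Sum>t\<in>S. ((if t = i then 1 else 0) - (if t \<in> F then a t else 0)) * (v t :: 'r::comm_ring_1))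
       = v i - (\<Sum>t\<in>F. a t * v t)"
proof -
  have "(\<Sum>t\<in>S. ((if t = i then 1 else 0) - (if t \<in> F then a t else 0)) * v t)
      = (\<Sum>t\<in>S. (if t = i then v t else 0)) - (\<Sum>t\<in>S. (if t \<in> F then a t * v t else 0))"
    by (simp add: left_diff_distrib sum_subtractf if_distrib[of "\<lambda>x. x * v _"] cong: if_cong)
  also have "\<dots> = v i - (\<Sum>t\<in>F. a t * v t)" using assms by (simp add: sum_if_sub)
  finally show ?thesis .
qed

lemma matapp_sum:
  "matapp N A (\<lambda>r. \<Sum>t\<in>I. a t * v t r) = (\<lambda>r. \<Sum>t\<in>I. a t * matapp N A (v t) r :: 'r::comm_ring_1)"
  unfolding matapp_def
  by (rule ext) (simp add: sum_distrib_left mult.left_commute sum.swap[of _ "{..<N}"])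

lemma vec_expand: "y \<in> vecs N \<Longrightarrow> y = (\<lambda>r. \<Sum>c<N. y c * (if r = c then 1 else 0) :: 'r::comm_ring_1)"
  by (rule ext) (auto simp: mult_indicator vecs_def not_less)

lemma unit_vecs: "c < N \<Longrightarrow> (\<lambda>r. if r = c then 1 else 0 :: 'r::comm_ring_1) \<in> vecs N"
  by (auto simp: vecs_def)

definition coord :: "nat \<Rightarrow> 'a set \<Rightarrow> ('a \<Rightarrow> nat \<Rightarrow> 'r::comm_ring_1) \<Rightarrow> (nat \<Rightarrow> 'r) \<Rightarrow> 'a \<Rightarrow> 'r" where
  "coord N G b y = (THE c. (\<forall>a. a \<notin> G \<longrightarrow> c a = 0) \<and> y = lincomb G c b)"

lemma coord_props:
  assumes "is_basis N G b" "y \<in> vecs N"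
  shows "(\<forall>a. a \<notin> G \<longrightarrow> coord N G b y a = 0) \<and> y = lincomb G (coord N G b y) b"
proof -
  have "\<exists>!c. (\<forall>a. a \<notin> G \<longrightarrow> c a = 0) \<and> y = lincomb G c b"
    using assms unfolding is_basis_def by blast
  then show ?thesis unfolding coord_def by (rule theI')
qed

lemma coord_repr:
  assumes "is_basis N G b" "y \<in> vecs N"
  shows "y = (\<lambda>r. \<Sum>g\<in>G. coord N G b y g * b g r)"
  using coord_props[OF assms] unfolding lincomb_def by simp

lemma coord_eqI:
  assumes B: "is_basis N G b" and c: "\<forall>a. a \<notin> G \<longrightarrow> c a = 0" and y: "y = lincomb G c b"
  shows "coord N G b y = c"
proof -
  have "y \<in> vecs N" using B y lincomb_vecs unfolding is_basis_def by metis
  then have "\<exists>!c. (\<forall>a. a \<notin> G \<longrightarrow> c a = 0) \<and> y = lincomb G c b"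
    using B unfolding is_basis_def by blast
  then show ?thesis unfolding coord_def by (rule the1_equality) (use c y in simp)
qed

lemma coord_sum:
  assumes B: "is_basis N G b" and u: "\<forall>t\<in>I. u t \<in> vecs N" and fin: "finite I"
  shows "coord N G b (\<lambda>r. \<Sum>t\<in>I. a t * u t r) = (\<lambda>g. \<Sum>t\<in>I. a t * coord N G b (u t) g)"
proof (rule coord_eqI[OF B])
  show "\<forall>x. x \<notin> G \<longrightarrow> (\<Sum>t\<in>I. a t * coord N G b (u t) x) = 0"
    using coord_props[OF B] u by (auto intro!: sum.neutral)
  have "lincomb G (\<lambda>g. \<Sum>t\<in>I. a t * coord N G b (u t) g) b
     = (\<lambda>r. \<Sum>t\<in>I. a t * (\<Sum>g\<in>G. coord N G b (u t) g * b g r))"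
    unfolding lincomb_def sum_distrib_right sum_distrib_left mult.assoc by (rule ext, rule sum.swap)
  also have "\<dots> = (\<lambda>r. \<Sum>t\<in>I. a t * u t r)"
  proof (rule ext, rule sum.cong[OF refl])
    fix r t assume t: "t \<in> I"
    show "a t * (\<Sum>g\<in>G. coord N G b (u t) g * b g r) = a t * u t r"
      using fun_cong[OF coord_repr[OF B, of "u t"], of r] u t by simp
  qed
  finally show "(\<lambda>r. \<Sum>t\<in>I. a t * u t r) = lincomb G (\<lambda>g. \<Sum>t\<in>I. a t * coord N G b (u t) g) b" by simp
qed

lemma coord_basis_vector:
  assumes B: "is_basis N G b" and g: "g \<in> G"
  shows "coord N G b (b g) = (\<lambda>h. if h = g then 1 else 0)"
proof (rule coord_eqI[OF B])
  show "\<forall>a. a \<notin> G \<longrightarrow> (if a = g then 1 else 0) = 0" using g by auto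
  have "finite G" using B unfolding is_basis_def by simp
  then show "b g = lincomb G (\<lambda>h. if h = g then 1 else 0) b"
    unfolding lincomb_def using g by (simp add: if_distrib[of "\<lambda>x. x * _"] cong: if_cong)
qed

lemma coord_lincomb:
  assumes B: "is_basis N G b" and fin: "finite I" and g: "\<forall>t\<in>I. f t \<in> G"
  shows "coord N G b (\<lambda>r. \<Sum>t\<in>I. a t * b (f t) r) = (\<lambda>h. \<Sum>t\<in>I. a t * (if h = f t then 1 else 0))"
  using coord_sum[OF B _ fin, of "\<lambda>t. b (f t)" a] g coord_basis_vector[OF B] is_basis_vecs[OF B] by auto

lemma is_basis_independent:
  assumes B: "is_basis N G b" and c: "\<forall>a. a \<notin> G \<longrightarrow> c a = 0" and z: "lincomb G c b = (\<lambda>r. 0)"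
  shows "c a = 0"
proof -
  have "coord N G b (\<lambda>r. 0) = c" using coord_eqI[OF B c] z by simp
  moreover have "coord N G b (\<lambda>r. 0) = (\<lambda>_. 0)"
    by (rule coord_eqI[OF B]) (auto simp: lincomb_def)
  ultimately show ?thesis by (metis)
qed

lemma coord_diff:
  assumes B: "is_basis N G b" and y: "y1 \<in> vecs N" "y2 \<in> vecs N"
  shows "coord N G b (\<lambda>r. y1 r - y2 r) = (\<lambda>g. coord N G b y1 g - coord N G b y2 g)"
  using coord_sum[OF B, of "{0::nat,1}" "\<lambda>t. if t = 0 then y1 else y2" "\<lambda>t. if t = 0 then 1 else -1"] y
  by simp

lemma coord_rspan:
  assumes B: "is_basis N G b" and sub: "S \<subseteq> G" and y: "y \<in> rspan S b"
  shows "y = (\<lambda>r. \<Sum>v\<in>S. coord N G b y v * b v r)" and "\<forall>v. v \<notin> S \<longrightarrow> coord N G b y v = 0"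
proof -
  have fG: "finite G" using is_basis_finite[OF B] .
  have fS: "finite S" using finite_subset[OF sub fG] .
  obtain c where c: "y = lincomb S c b" using y unfolding rspan_def by blast
  have ce: "coord N G b y = (\<lambda>h. if h \<in> S then c h else 0)"
  proof (rule coord_eqI[OF B])
    show "\<forall>a. a \<notin> G \<longrightarrow> (if a \<in> S then c a else 0) = 0" using sub by auto
    show "y = lincomb G (\<lambda>h. if h \<in> S then c h else 0) b"
      unfolding c lincomb_def by (rule ext) (simp add: sum_if_sub[OF fG sub] if_distrib[of "\<lambda>x. x * _"] cong: if_cong)
  qed
  show "y = (\<lambda>r. \<Sum>v\<in>S. coord N G b y v * b v r)" unfolding ce using c unfolding lincomb_def by simp
  show "\<forall>v. v \<notin> S \<longrightarrow> coord N G b y v = 0" unfolding ce by simp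
qed

lemma matapp_coord_matrix:
  fixes \<Lambda> :: "'a \<Rightarrow> nat \<Rightarrow> 'r::comm_ring_1"
  assumes GB: "is_basis N G \<Lambda>" and fF: "finite F" and \<mu>v: "\<forall>i\<in>F. \<mu> i \<in> vecs n"
    and y: "y \<in> vecs N"
  shows "matapp N (\<lambda>r c. if r < n \<and> c < N then \<Sum>i\<in>F. coord N G \<Lambda> (\<lambda>r. if r = c then 1 else 0) (h i) * \<mu> i r else 0) y
        = (\<lambda>r. \<Sum>i\<in>F. coord N G \<Lambda> y (h i) * \<mu> i r)"
proof -
  let ?e = "\<lambda>c. (\<lambda>r. if r = c then 1 else 0 :: 'r)"
  have cy: "coord N G \<Lambda> y = (\<lambda>g. \<Sum>c<N. y c * coord N G \<Lambda> (?e c) g)"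
    using coord_sum[OF GB, of "{..<N}" ?e y] unit_vecs vec_expand[OF y, symmetric] by auto
  show ?thesis
  proof (rule ext)
    fix r
    show "matapp N (\<lambda>r c. if r < n \<and> c < N then \<Sum>i\<in>F. coord N G \<Lambda> (?e c) (h i) * \<mu> i r else 0) y r
        = (\<Sum>i\<in>F. coord N G \<Lambda> y (h i) * \<mu> i r)"
    proof (cases "r < n")
      case True
      then show ?thesis unfolding matapp_def cy
        by (simp add: sum_distrib_left sum_distrib_right mult_ac sum.swap[of _ F])
    next
      case False
      then have "\<forall>i\<in>F. \<mu> i r = 0" using \<mu>v by (auto simp: vecs_def)
      then show ?thesis using False unfolding matapp_def by simp
    qed
  qed
qed

lemma coord_lincomb_in:
  assumes B: "is_basis N G b" and I: "finite I" "inj_on f I" "f ` I \<subseteq> G" and t: "t \<in> I"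
  shows "coord N G b (\<lambda>r. \<Sum>s\<in>I. a s * b (f s) r) (f t) = a t"
proof -
  have "coord N G b (\<lambda>r. \<Sum>s\<in>I. a s * b (f s) r) = (\<lambda>h. \<Sum>s\<in>I. a s * (if h = f s then 1 else 0))"
    by (rule coord_lincomb[OF B I(1)]) (use I(3) in auto)
  then have "coord N G b (\<lambda>r. \<Sum>s\<in>I. a s * b (f s) r) (f t) = (\<Sum>s\<in>I. a s * (if f t = f s then 1 else 0))"
    by simp
  also have "\<dots> = (\<Sum>s\<in>I. if s = t then a s else 0)"
    using I(2) t by (intro sum.cong) (auto dest: inj_onD)
  finally show ?thesis using I(1) t by simp
qed

lemma coord_lincomb_notin:
  assumes B: "is_basis N G b" and "finite I" "f ` I \<subseteq> G" "h \<notin> f ` I"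
  shows "coord N G b (\<lambda>r. \<Sum>s\<in>I. a s * b (f s) r) h = 0"
proof -
  have "coord N G b (\<lambda>r. \<Sum>s\<in>I. a s * b (f s) r) = (\<lambda>h. \<Sum>s\<in>I. a s * (if h = f s then 1 else 0))"
    by (rule coord_lincomb[OF B assms(2)]) (use assms(3) in auto)
  then show ?thesis using assms(4) by (auto intro!: sum.neutral)
qed

section \<open>The complexes K and K(J)\<close>

definition pure_complex :: "nat set set \<Rightarrow> nat \<Rightarrow> nat \<Rightarrow> bool" where
  "pure_complex K m n \<longleftrightarrow> K \<subseteq> Pow {1..m} \<and> {} \<in> K \<and> (\<forall>F\<in>K. \<forall>G. G \<subseteq> F \<longrightarrow> G \<in> K) \<and>
     (\<forall>v\<in>{1..m}. {v} \<in> K) \<and> (\<forall>\<sigma>\<in>K. \<exists>F\<in>K. \<sigma> \<subseteq> F \<and> card F = n) \<and> (\<forall>\<sigma>\<in>K. card \<sigma> \<le> n)"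

lemma star_shaped_sphere_pure: "star_shaped_sphere m n K \<Longrightarrow> pure_complex K m n"
  unfolding star_shaped_sphere_def simplicial_complex_on_def pure_complex_def
  by (elim conjE) (intro conjI)

lemma pure_complex_facet: "pure_complex K m n \<Longrightarrow> \<sigma> \<in> K \<Longrightarrow> \<exists>F\<in>K. \<sigma> \<subseteq> F \<and> card F = n"
  unfolding pure_complex_def by (elim conjE) simp

lemma pure_complex_face_subset: "pure_complex K m n \<Longrightarrow> F \<in> K \<Longrightarrow> F \<subseteq> {1..m}"
  unfolding pure_complex_def by auto

lemma pure_complex_downward_closed: "pure_complex K m n \<Longrightarrow> F \<in> K \<Longrightarrow> G \<subseteq> F \<Longrightarrow> G \<in> K"
  unfolding pure_complex_def by (elim conjE) simp

lemma pure_complex_card_le: "pure_complex K m n \<Longrightarrow> F \<in> K \<Longrightarrow> card F \<le> n"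
  unfolding pure_complex_def by (elim conjE) simp

lemma pure_complex_empty: "pure_complex K m n \<Longrightarrow> {} \<in> K"
  unfolding pure_complex_def by (elim conjE) simp

lemma pure_complex_singleton: "pure_complex K m n \<Longrightarrow> v \<in> {1..m} \<Longrightarrow> {v} \<in> K"
  unfolding pure_complex_def by (elim conjE) simp

lemma I_J_mem: "\<alpha> \<in> I_J m J \<Longrightarrow> i \<in> {1..m} \<Longrightarrow> \<alpha> i \<in> {1..J i}"
  unfolding I_J_def by auto

lemma I_J_out: "\<alpha> \<in> I_J m J \<Longrightarrow> i \<notin> {1..m} \<Longrightarrow> \<alpha> i = undefined"
  unfolding I_J_def by auto

lemma I_J_iff: "\<alpha> \<in> I_J m J \<longleftrightarrow> (\<forall>i\<in>{1..m}. \<alpha> i \<in> {1..J i}) \<and> (\<forall>i. i \<notin> {1..m} \<longrightarrow> \<alpha> i = undefined)"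
  unfolding I_J_def PiE_iff extensional_def by auto

lemma sigma_face_iff: "\<alpha> \<in> I_J m J \<Longrightarrow>
   (i, k) \<in> sigma_face m J \<alpha> \<longleftrightarrow> i \<in> {1..m} \<and> k \<in> {1..J i} \<and> k \<noteq> \<alpha> i"
  unfolding sigma_face_def KJ_verts_def by auto

lemma KJ_verts_iff: "(i, k) \<in> KJ_verts m J \<longleftrightarrow> i \<in> {1..m} \<and> k \<in> {1..J i}"
  unfolding KJ_verts_def by auto

lemma finite_KJ_verts: "finite (KJ_verts m J)"
  unfolding KJ_verts_def by auto

lemma sigma_face_subset_verts: "sigma_face m J \<alpha> \<subseteq> KJ_verts m J"
  unfolding sigma_face_def by auto

lemma finite_sigma_face: "finite (sigma_face m J \<alpha>)"
  using finite_subset[OF sigma_face_subset_verts finite_KJ_verts] .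

definition graph_on :: "(nat \<Rightarrow> nat) \<Rightarrow> nat set \<Rightarrow> (nat \<times> nat) set" where
  "graph_on \<alpha> F = (\<lambda>i. (i, \<alpha> i)) ` F"

lemma card_graph_on: "card (graph_on \<alpha> F) = card F"
  unfolding graph_on_def by (rule card_image) (auto simp: inj_on_def)

lemma sum_graph_on: "(\<Sum>v\<in>graph_on \<alpha> D. h v) = (\<Sum>i\<in>D. h (i, \<alpha> i))"
  unfolding graph_on_def by (subst sum.reindex) (auto simp: inj_on_def)

lemma notin_sigma_face:
  "v \<in> KJ_verts m J \<Longrightarrow> v \<notin> sigma_face m J \<gamma> \<Longrightarrow> fst v \<in> {1..m} \<and> v = (fst v, \<gamma> (fst v))"
  unfolding sigma_face_def KJ_verts_def by auto

lemma graph_point_notin_sigma_face: "(i, \<alpha> i) \<notin> sigma_face m J \<alpha>"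
  unfolding sigma_face_def KJ_verts_def by auto

lemma sum_minus_one: "(\<forall>i\<in>{1..m}. 1 \<le> (J i::nat)) \<Longrightarrow> (\<Sum>i=1..m. J i) - m = (\<Sum>i=1..m. J i - 1)"
proof -
  assume a: "\<forall>i\<in>{1..m}. 1 \<le> J i"
  have "(\<Sum>i=1..m. J i - 1) = (\<Sum>i=1..m. J i) - (\<Sum>i=1..m. (1::nat))"
    by (rule sum_subtractf_nat) (use a in auto)
  then show ?thesis by simp
qed

lemma card_sigma_face:
  assumes \<alpha>: "\<alpha> \<in> I_J m J" and J_pos: "\<forall>i\<in>{1..m}. 1 \<le> J i"
  shows "card (sigma_face m J \<alpha>) = dimJ m n J - n"
proof -
  have gs: "graph_on \<alpha> {1..m} \<subseteq> KJ_verts m J" using I_J_mem[OF \<alpha>] unfolding graph_on_def KJ_verts_def by auto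
  have eq: "sigma_face m J \<alpha> = KJ_verts m J - graph_on \<alpha> {1..m}"
    unfolding sigma_face_def graph_on_def by auto
  have cv: "card (KJ_verts m J) = (\<Sum>i=1..m. J i)"
    unfolding KJ_verts_def by (simp add: card_SigmaI)
  have "card (sigma_face m J \<alpha>) = (\<Sum>i=1..m. J i) - m"
    unfolding eq using card_Diff_subset[OF finite_subset[OF gs finite_KJ_verts] gs] cv card_graph_on[of \<alpha> "{1..m}"]
    by simp
  then show ?thesis unfolding dimJ_def using sum_minus_one[OF J_pos] by simp
qed

definition KJ_facet :: "nat \<Rightarrow> (nat \<Rightarrow> nat) \<Rightarrow> (nat \<Rightarrow> nat) \<Rightarrow> nat set \<Rightarrow> (nat \<times> nat) set" where
  "KJ_facet m J \<alpha> F = sigma_face m J \<alpha> \<union> graph_on \<alpha> F"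

lemma sigma_face_graph_on_disjoint: "F \<subseteq> {1..m} \<Longrightarrow> sigma_face m J \<alpha> \<inter> graph_on \<alpha> F = {}"
  unfolding sigma_face_def graph_on_def by auto

lemma sum_KJ_facet:
  assumes "F \<subseteq> {1..m}" "finite F"
  shows "(\<Sum>g\<in>KJ_facet m J \<alpha> F. h g) = (\<Sum>g\<in>sigma_face m J \<alpha>. h g) + (\<Sum>j\<in>F. h (j, \<alpha> j))"
proof -
  have "(\<Sum>g\<in>KJ_facet m J \<alpha> F. h g) = (\<Sum>g\<in>sigma_face m J \<alpha>. h g) + (\<Sum>g\<in>graph_on \<alpha> F. h g)"
    unfolding KJ_facet_def
    by (rule sum.union_disjoint)
      (use finite_sigma_face assms sigma_face_graph_on_disjoint[OF assms(1)] in \<open>auto simp: graph_on_def\<close>)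
  then show ?thesis by (simp add: sum_graph_on)
qed

lemma card_KJ_facet_eq:
  assumes "F \<subseteq> {1..m}"
  shows "card (KJ_facet m J \<alpha> F) = card (sigma_face m J \<alpha>) + card F"
proof -
  have "finite F" using assms finite_subset by blast
  then have "card (KJ_facet m J \<alpha> F) = card (sigma_face m J \<alpha>) + card (graph_on \<alpha> F)"
    unfolding KJ_facet_def
    by (intro card_Un_disjoint) (use finite_sigma_face sigma_face_graph_on_disjoint[OF assms] in \<open>auto simp: graph_on_def\<close>)
  then show ?thesis by (simp add: card_graph_on)
qed

lemma card_KJ_facet:
  assumes \<alpha>: "\<alpha> \<in> I_J m J" and J_pos: "\<forall>i\<in>{1..m}. 1 \<le> J i" and F: "F \<subseteq> {1..m}" "card F = n"
  shows "card (KJ_facet m J \<alpha> F) = dimJ m n J"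
  using card_KJ_facet_eq[OF F(1)] card_sigma_face[OF \<alpha> J_pos] F(2) unfolding dimJ_def by simp

lemma KJ_facet_in_KJ:
  assumes pure: "pure_complex K m n" and \<alpha>: "\<alpha> \<in> I_J m J" and F: "F \<in> K"
  shows "KJ_facet m J \<alpha> F \<in> KJ K m J"
proof -
  have Fs: "F \<subseteq> {1..m}" using pure_complex_face_subset[OF pure F] .
  have sub: "KJ_facet m J \<alpha> F \<subseteq> KJ_verts m J"
    using sigma_face_subset_verts I_J_mem[OF \<alpha>] Fs unfolding KJ_facet_def graph_on_def KJ_verts_def by auto
  have "\<not> (SIGMA i:\<tau>. {1..J i}) \<subseteq> KJ_facet m J \<alpha> F" if \<tau>: "\<tau> \<in> min_nonfaces {1..m} K" for \<tau>
  proof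
    assume S: "(SIGMA i:\<tau>. {1..J i}) \<subseteq> KJ_facet m J \<alpha> F"
    have "\<tau> \<notin> K" "\<tau> \<subseteq> {1..m}" using \<tau> unfolding min_nonfaces_def by auto
    then have "\<not> \<tau> \<subseteq> F" using pure_complex_downward_closed[OF pure F] by blast
    then obtain i where i: "i \<in> \<tau>" "i \<notin> F" by blast
    have im: "i \<in> {1..m}" using i \<open>\<tau> \<subseteq> {1..m}\<close> by auto
    have "(i, \<alpha> i) \<in> (SIGMA i:\<tau>. {1..J i})" using I_J_mem[OF \<alpha> im] i by auto
    moreover have "(i, \<alpha> i) \<notin> KJ_facet m J \<alpha> F" using i im unfolding KJ_facet_def graph_on_def sigma_face_def by auto
    ultimately show False using S by blast
  qed
  then show ?thesis unfolding KJ_def using sub by blast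
qed

lemma exists_min_nonface:
  assumes pure: "pure_complex K m n" and H: "H \<subseteq> {1..m}" "H \<notin> K"
  shows "\<exists>\<tau>\<in>min_nonfaces {1..m} K. \<tau> \<subseteq> H"
proof -
  have fH: "finite H" using H finite_subset by blast
  let ?P = "\<lambda>T. T \<subseteq> H \<and> T \<notin> K"
  obtain T where T: "?P T" "\<And>T'. ?P T' \<Longrightarrow> card T \<le> card T'"
    using ex_has_least_nat[of ?P H card] H by blast
  have "T \<in> min_nonfaces {1..m} K"
    unfolding min_nonfaces_def
  proof (intro CollectI conjI ballI)
    show "T \<subseteq> {1..m}" using T H by auto
    show "T \<notin> K" using T by auto
    fix v assume v: "v \<in> T"
    have fT: "finite T" using T fH finite_subset by blast
    show "T - {v} \<in> K"
    proof (rule ccontr)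
      assume "T - {v} \<notin> K"
      then have "card T \<le> card (T - {v})" using T(1) by (intro T(2)) auto
      then show False using card_Diff1_less[OF fT v] by linarith
    qed
  qed
  then show ?thesis using T by blast
qed

text \<open>\<open>H\<close> collects the indices \<open>i\<close> all of whose copies \<open>(i, k)\<close> lie in \<open>G\<close>; elsewhere \<open>\<alpha>\<close> picks a
  missing copy.\<close>

lemma KJ_face_subset_facet:
  assumes pure: "pure_complex K m n" and J_pos: "\<forall>i\<in>{1..m}. 1 \<le> J i" and G: "G \<in> KJ K m J"
  obtains \<alpha> H where "\<alpha> \<in> I_J m J" "H \<in> K" "G \<subseteq> KJ_facet m J \<alpha> H"
proof -
  have G_verts: "G \<subseteq> KJ_verts m J" and G_nonfaces: "\<forall>\<tau>\<in>min_nonfaces {1..m} K. \<not> (SIGMA i:\<tau>. {1..J i}) \<subseteq> G"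
    using G unfolding KJ_def by auto
  define H where "H = {i\<in>{1..m}. \<forall>k\<in>{1..J i}. (i, k) \<in> G}"
  have "H \<subseteq> {1..m}" unfolding H_def by auto
  have H: "H \<in> K"
  proof (rule ccontr)
    assume "H \<notin> K"
    then obtain \<tau> where \<tau>: "\<tau> \<in> min_nonfaces {1..m} K" "\<tau> \<subseteq> H"
      using exists_min_nonface[OF pure \<open>H \<subseteq> {1..m}\<close>] by blast
    then have "(SIGMA i:\<tau>. {1..J i}) \<subseteq> G" unfolding H_def by auto
    then show False using G_nonfaces \<tau> by blast
  qed
  have "\<forall>i\<in>{1..m}. \<exists>k. k \<in> {1..J i} \<and> (i \<notin> H \<longrightarrow> (i, k) \<notin> G)"
  proof
    fix i assume i: "i \<in> {1..m}"
    show "\<exists>k. k \<in> {1..J i} \<and> (i \<notin> H \<longrightarrow> (i, k) \<notin> G)"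
    proof (cases "i \<in> H")
      case True then show ?thesis using J_pos i by (intro exI[of _ 1]) auto
    next
      case False then show ?thesis using i unfolding H_def by auto
    qed
  qed
  then obtain f where f: "\<forall>i\<in>{1..m}. f i \<in> {1..J i} \<and> (i \<notin> H \<longrightarrow> (i, f i) \<notin> G)"
    by metis
  define \<alpha> where "\<alpha> = restrict f {1..m}"
  have \<alpha>: "\<alpha> \<in> I_J m J" unfolding \<alpha>_def I_J_def using f by auto
  have "G \<subseteq> KJ_facet m J \<alpha> H"
  proof
    fix v assume v: "v \<in> G"
    obtain i k where ik: "v = (i, k)" "i \<in> {1..m}" "k \<in> {1..J i}"
      using subsetD[OF G_verts v] by (cases v) (auto simp: KJ_verts_iff)
    show "v \<in> KJ_facet m J \<alpha> H"
    proof (cases "k = \<alpha> i")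
      case True
      then have "i \<in> H" using f ik v unfolding \<alpha>_def by auto
      then show ?thesis using True ik unfolding KJ_facet_def graph_on_def by auto
    next
      case False then show ?thesis using ik sigma_face_iff[OF \<alpha>] unfolding KJ_facet_def by auto
    qed
  qed
  then show ?thesis using that \<alpha> H by blast
qed

lemma KJ_facet_classification:
  assumes pure: "pure_complex K m n" and J_pos: "\<forall>i\<in>{1..m}. 1 \<le> J i"
    and G: "G \<in> KJ K m J" "card G = dimJ m n J"
  shows "\<exists>\<alpha>\<in>I_J m J. \<exists>F\<in>K. card F = n \<and> G = KJ_facet m J \<alpha> F"
proof -
  obtain \<alpha> H where \<alpha>: "\<alpha> \<in> I_J m J" and H: "H \<in> K" and sub: "G \<subseteq> KJ_facet m J \<alpha> H"
    using KJ_face_subset_facet[OF pure J_pos G(1)] by blast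
  have H_sub: "H \<subseteq> {1..m}" using pure_complex_face_subset[OF pure H] .
  have fin: "finite (KJ_facet m J \<alpha> H)"
    unfolding KJ_facet_def graph_on_def using finite_sigma_face finite_subset[OF H_sub] by auto
  have card_facet: "card (KJ_facet m J \<alpha> H) = dimJ m n J - n + card H"
    using card_KJ_facet_eq[OF H_sub] card_sigma_face[OF \<alpha> J_pos] by simp
  have "card H \<le> n" using pure_complex_card_le[OF pure H] .
  moreover have "dimJ m n J \<le> dimJ m n J - n + card H" using card_mono[OF fin sub] G(2) card_facet by simp
  ultimately have "card H = n" unfolding dimJ_def by linarith
  then have "G = KJ_facet m J \<alpha> H" using card_subset_eq[OF fin sub] card_facet G(2) unfolding dimJ_def by simp
  then show ?thesis using \<alpha> H \<open>card H = n\<close> by blast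
qed

section \<open>Projections via relation modules\<close>

definition vanishes_outside :: "nat \<Rightarrow> (nat \<Rightarrow> 'r::zero) \<Rightarrow> bool" where
  "vanishes_outside m x \<longleftrightarrow> (\<forall>i. i \<notin> {1..m} \<longrightarrow> x i = 0)"

definition relations :: "nat \<Rightarrow> (nat \<Rightarrow> nat \<Rightarrow> 'r::comm_ring_1) \<Rightarrow> (nat \<Rightarrow> 'r) set" where
  "relations m \<mu> = {x. vanishes_outside m x \<and> (\<lambda>r. \<Sum>i=1..m. x i * \<mu> i r) = (\<lambda>r. 0)}"

text \<open>The relation module of \<open>proj\<^bsub>\<sigma>(\<alpha>)\<^esub> \<Lambda>\<close>, computed upstairs: relations modulo the span of \<open>\<sigma>(\<alpha>)\<close>.\<close>

definition proj_relations :: "nat \<Rightarrow> (nat \<Rightarrow> nat) \<Rightarrow> (nat \<times> nat \<Rightarrow> nat \<Rightarrow> 'r::comm_ring_1) \<Rightarrow> (nat \<Rightarrow> nat) \<Rightarrow> (nat \<Rightarrow> 'r) set" where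
  "proj_relations m J \<Lambda> \<alpha> = {x. vanishes_outside m x \<and> (\<lambda>r. \<Sum>i=1..m. x i * \<Lambda> (i, \<alpha> i) r) \<in> rspan (sigma_face m J \<alpha>) \<Lambda>}"

lemma relations_vanishes_outside: "x \<in> relations m \<mu> \<Longrightarrow> vanishes_outside m x"
  unfolding relations_def by blast

lemma relationsD: "x \<in> relations m \<mu> \<Longrightarrow> (\<Sum>i=1..m. x i * \<mu> i r) = 0"
  unfolding relations_def by (auto dest: fun_cong)

lemma relations_eq_proj_relations:
  fixes \<Lambda> :: "nat \<times> nat \<Rightarrow> nat \<Rightarrow> 'r::comm_ring_1"
  assumes \<Lambda>_vecs: "\<forall>v\<in>KJ_verts m J. \<Lambda> v \<in> vecs (dimJ m n J)" and \<alpha>: "\<alpha> \<in> I_J m J"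
    and pr: "proj_rep m n J \<Lambda> \<alpha> \<mu>"
  shows "relations m \<mu> = proj_relations m J \<Lambda> \<alpha>"
proof -
  let ?N = "dimJ m n J"
  obtain A where A: "{x \<in> vecs ?N. matapp ?N A x = (\<lambda>r. 0)} = rspan (sigma_face m J \<alpha>) \<Lambda>"
    "\<forall>i\<in>{1..m}. \<mu> i = matapp ?N A (\<Lambda> (i, \<alpha> i))"
    using pr unfolding proj_rep_def by blast
  have eq: "(\<lambda>r. \<Sum>i=1..m. x i * \<mu> i r) = matapp ?N A (\<lambda>r. \<Sum>i=1..m. x i * \<Lambda> (i, \<alpha> i) r)" for x
    unfolding matapp_sum using A(2) by (auto intro!: ext sum.cong)
  have "(\<lambda>r. \<Sum>i=1..m. x i * \<Lambda> (i, \<alpha> i) r) \<in> vecs ?N" for x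
    by (rule vecs_sum) (use \<Lambda>_vecs I_J_mem[OF \<alpha>] KJ_verts_iff in auto)
  then show ?thesis
    unfolding relations_def proj_relations_def eq using A(1) by blast
qed

locale KJ_char_map =
  fixes K :: "nat set set" and m n :: nat and J :: "nat \<Rightarrow> nat"
    and \<Lambda> :: "nat \<times> nat \<Rightarrow> nat \<Rightarrow> 'r::comm_ring_1"
  assumes pure: "pure_complex K m n" and J_pos: "\<forall>i\<in>{1..m}. 1 \<le> J i"
    and char: "char_map (KJ K m J) (KJ_verts m J) (dimJ m n J) \<Lambda>"
begin

abbreviation "N' \<equiv> dimJ m n J"

lemma \<Lambda>_vecs: "v \<in> KJ_verts m J \<Longrightarrow> \<Lambda> v \<in> vecs N'"
  using char unfolding char_map_def by blast

lemma \<Lambda>_graph_vecs: "\<alpha> \<in> I_J m J \<Longrightarrow> i \<in> {1..m} \<Longrightarrow> \<Lambda> (i, \<alpha> i) \<in> vecs N'"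
  using \<Lambda>_vecs I_J_mem KJ_verts_iff by blast

lemma \<Lambda>_sigma_face_vecs: "v \<in> sigma_face m J \<alpha> \<Longrightarrow> \<Lambda> v \<in> vecs N'"
  using \<Lambda>_vecs sigma_face_subset_verts by blast

lemma facet_basis: "\<alpha> \<in> I_J m J \<Longrightarrow> F \<in> K \<Longrightarrow> card F = n \<Longrightarrow> is_basis N' (KJ_facet m J \<alpha> F) \<Lambda>"
  using char KJ_facet_in_KJ[OF pure] card_KJ_facet[OF _ J_pos pure_complex_face_subset[OF pure]]
  unfolding char_map_def by blast

context
  fixes \<alpha> :: "nat \<Rightarrow> nat" and F :: "nat set" and \<mu> :: "nat \<Rightarrow> nat \<Rightarrow> 'r"
  assumes \<alpha>: "\<alpha> \<in> I_J m J" and F: "F \<in> K" "card F = n" and \<mu>: "char_map K {1..m} n \<mu>"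
begin

text \<open>The matrix of the projection onto the coordinates of the graph points of \<open>F\<close>,
  followed by the identification of those coordinates with \<open>\<mu>\<close>.\<close>

definition proj_matrix :: "nat \<Rightarrow> nat \<Rightarrow> 'r" where
  "proj_matrix = (\<lambda>r c. if r < n \<and> c < N' then
     \<Sum>i\<in>F. coord N' (KJ_facet m J \<alpha> F) \<Lambda> (\<lambda>r. if r = c then 1 else 0) (i, \<alpha> i) * \<mu> i r else 0)"

lemma F_subset: "F \<subseteq> {1..m}"
  using pure_complex_face_subset[OF pure F(1)] .

lemma finite_F: "finite F"
  using F_subset finite_subset by blast

lemma facet_basis_\<alpha>: "is_basis N' (KJ_facet m J \<alpha> F) \<Lambda>"
  using facet_basis[OF \<alpha> F] .

lemma \<mu>_basis: "is_basis n F \<mu>"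
  using \<mu> F unfolding char_map_def by blast

lemma graph_point_in_facet: "i \<in> F \<Longrightarrow> (i, \<alpha> i) \<in> KJ_facet m J \<alpha> F"
  unfolding KJ_facet_def graph_on_def by auto

lemma matapp_proj_matrix:
  "y \<in> vecs N' \<Longrightarrow>
   matapp N' proj_matrix y = (\<lambda>r. \<Sum>i\<in>F. coord N' (KJ_facet m J \<alpha> F) \<Lambda> y (i, \<alpha> i) * \<mu> i r)"
  unfolding proj_matrix_def
  by (rule matapp_coord_matrix[OF facet_basis_\<alpha> finite_F]) (use \<mu> F_subset in \<open>auto simp: char_map_def\<close>)

lemma coord_graph_comb:
  "j \<in> F \<Longrightarrow> coord N' (KJ_facet m J \<alpha> F) \<Lambda> (\<lambda>r. \<Sum>i\<in>F. d i * \<Lambda> (i, \<alpha> i) r) (j, \<alpha> j) = d j"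
  by (rule coord_lincomb_in[OF facet_basis_\<alpha> finite_F]) (auto simp: inj_on_def graph_point_in_facet)

lemma proj_matrix_onto: "matapp N' proj_matrix ` vecs N' = vecs n"
proof
  show "matapp N' proj_matrix ` vecs N' \<subseteq> vecs n"
    unfolding proj_matrix_def matapp_def vecs_def by auto
  show "vecs n \<subseteq> matapp N' proj_matrix ` vecs N'"
  proof
    fix w :: "nat \<Rightarrow> 'r" assume "w \<in> vecs n"
    then obtain d where d: "w = lincomb F d \<mu>"
      using \<mu>_basis unfolding is_basis_def by blast
    let ?y = "\<lambda>r. \<Sum>i\<in>F. d i * \<Lambda> (i, \<alpha> i) r"
    have y: "?y \<in> vecs N'" by (rule vecs_sum) (use \<Lambda>_graph_vecs[OF \<alpha>] F_subset in auto)
    have "matapp N' proj_matrix ?y = w"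
      unfolding matapp_proj_matrix[OF y] d lincomb_def by (auto simp: coord_graph_comb intro!: sum.cong)
    then show "w \<in> matapp N' proj_matrix ` vecs N'" using y by blast
  qed
qed

lemma proj_matrix_kernel:
  "{x \<in> vecs N'. matapp N' proj_matrix x = (\<lambda>r. 0)} = rspan (sigma_face m J \<alpha>) \<Lambda>"
proof (intro set_eqI iffI)
  let ?G = "KJ_facet m J \<alpha> F"
  fix y assume "y \<in> {x \<in> vecs N'. matapp N' proj_matrix x = (\<lambda>r. 0)}"
  then have y: "y \<in> vecs N'" and "(\<lambda>r. \<Sum>i\<in>F. coord N' ?G \<Lambda> y (i, \<alpha> i) * \<mu> i r) = (\<lambda>r. 0)"
    using matapp_proj_matrix by auto
  then have graph_coords: "coord N' ?G \<Lambda> y (i, \<alpha> i) = 0" if "i \<in> F" for i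
    using is_basis_independent[OF \<mu>_basis, of "\<lambda>i. if i \<in> F then coord N' ?G \<Lambda> y (i, \<alpha> i) else 0" i] that
    unfolding lincomb_def by (simp cong: sum.cong)
  have "y = (\<lambda>r. \<Sum>g\<in>?G. coord N' ?G \<Lambda> y g * \<Lambda> g r)"
    using coord_repr[OF facet_basis_\<alpha> y] .
  also have "\<dots> = (\<lambda>r. \<Sum>g\<in>sigma_face m J \<alpha>. coord N' ?G \<Lambda> y g * \<Lambda> g r)"
    by (simp add: sum_KJ_facet[OF F_subset finite_F] graph_coords)
  finally show "y \<in> rspan (sigma_face m J \<alpha>) \<Lambda>" unfolding rspan_def lincomb_def by blast
next
  let ?G = "KJ_facet m J \<alpha> F"
  fix y assume y: "y \<in> rspan (sigma_face m J \<alpha>) \<Lambda>"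
  have yv: "y \<in> vecs N'" using rspan_vecs[OF _ y] \<Lambda>_sigma_face_vecs by blast
  have "coord N' ?G \<Lambda> y (i, \<alpha> i) = 0" for i
    using coord_rspan(2)[OF facet_basis_\<alpha> _ y] graph_point_notin_sigma_face
    unfolding KJ_facet_def by blast
  then show "y \<in> {x \<in> vecs N'. matapp N' proj_matrix x = (\<lambda>r. 0)}"
    using matapp_proj_matrix[OF yv] yv by simp
qed

text \<open>A vertex outside \<open>F\<close> is expressed through \<open>F\<close> modulo \<open>\<sigma>(\<alpha>)\<close>; that expression is a relation
  upstairs, hence (by the hypothesis) also a relation of \<open>\<mu>\<close>.\<close>

lemma proj_matrix_vertex:
  assumes rel: "relations m \<mu> = proj_relations m J \<Lambda> \<alpha>" and i: "i \<in> {1..m}"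
  shows "\<mu> i = matapp N' proj_matrix (\<Lambda> (i, \<alpha> i))"
proof -
  let ?G = "KJ_facet m J \<alpha> F"
  let ?d = "coord N' ?G \<Lambda> (\<Lambda> (i, \<alpha> i))"
  have y: "\<Lambda> (i, \<alpha> i) \<in> vecs N'" using \<Lambda>_graph_vecs[OF \<alpha> i] .
  have rep: "\<Lambda> (i, \<alpha> i) r = (\<Sum>g\<in>sigma_face m J \<alpha>. ?d g * \<Lambda> g r) + (\<Sum>j\<in>F. ?d (j, \<alpha> j) * \<Lambda> (j, \<alpha> j) r)" for r
    using fun_cong[OF coord_repr[OF facet_basis_\<alpha> y], of r] by (simp add: sum_KJ_facet[OF F_subset finite_F])
  define x where "x = (\<lambda>t. (if t = i then 1 else 0) - (if t \<in> F then ?d (t, \<alpha> t) else 0))"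
  have x_sum: "(\<Sum>t=1..m. x t * v t) = v i - (\<Sum>t\<in>F. ?d (t, \<alpha> t) * v t)" for v :: "nat \<Rightarrow> 'r"
    unfolding x_def by (rule sum_delta_minus) (use i F_subset in auto)
  have "vanishes_outside m x" unfolding vanishes_outside_def x_def using i F_subset by auto
  moreover have "(\<lambda>r. \<Sum>t=1..m. x t * \<Lambda> (t, \<alpha> t) r) = (\<lambda>r. \<Sum>g\<in>sigma_face m J \<alpha>. ?d g * \<Lambda> g r)"
  proof
    fix r show "(\<Sum>t=1..m. x t * \<Lambda> (t, \<alpha> t) r) = (\<Sum>g\<in>sigma_face m J \<alpha>. ?d g * \<Lambda> g r)"
      using x_sum[of "\<lambda>t. \<Lambda> (t, \<alpha> t) r"] rep[of r] by simp
  qed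
  ultimately have "x \<in> proj_relations m J \<Lambda> \<alpha>" unfolding proj_relations_def rspan_def lincomb_def by auto
  then have "(\<Sum>t=1..m. x t * \<mu> t r) = 0" for r using rel relationsD by blast
  then have "\<mu> i r = (\<Sum>t\<in>F. ?d (t, \<alpha> t) * \<mu> t r)" for r
    using x_sum[of "\<lambda>t. \<mu> t r"] by simp
  then show ?thesis using matapp_proj_matrix[OF y] by auto
qed

lemma proj_rep_if_relations_eq:
  "relations m \<mu> = proj_relations m J \<Lambda> \<alpha> \<Longrightarrow> proj_rep m n J \<Lambda> \<alpha> \<mu>"
  unfolding proj_rep_def
  using proj_matrix_onto proj_matrix_kernel proj_matrix_vertex
  by (intro bexI[of _ proj_matrix]) (auto simp: lin_maps_def proj_matrix_def)

end

lemma proj_rep_iff_relations: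
  assumes "\<alpha> \<in> I_J m J" "char_map K {1..m} n \<mu>"
  shows "proj_rep m n J \<Lambda> \<alpha> \<mu> \<longleftrightarrow> relations m \<mu> = proj_relations m J \<Lambda> \<alpha>"
proof -
  obtain F where "F \<in> K" "card F = n" using pure_complex_facet[OF pure pure_complex_empty[OF pure]] by blast
  then show ?thesis
    using proj_rep_if_relations_eq assms relations_eq_proj_relations[OF _ assms(1)] \<Lambda>_vecs by blast
qed

end

lemma realizable_relations:
  assumes "pure_complex K m n" "\<forall>i\<in>{1..m}. 1 \<le> J i" "realizable K m n J p"
  shows "\<exists>\<Lambda>. KJ_char_map K m n J \<Lambda> \<and> (\<forall>\<alpha>\<in>I_J m J. relations m (p \<alpha>) = proj_relations m J \<Lambda> \<alpha>)"
proof -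
  obtain \<Lambda> where char: "char_map (KJ K m J) (KJ_verts m J) (dimJ m n J) \<Lambda>"
    and pr: "\<forall>\<alpha>\<in>I_J m J. proj_rep m n J \<Lambda> \<alpha> (p \<alpha>)" using assms(3) unfolding realizable_def by blast
  have "\<forall>v\<in>KJ_verts m J. \<Lambda> v \<in> vecs (dimJ m n J)" using char unfolding char_map_def by blast
  then show ?thesis using char pr assms(1,2) relations_eq_proj_relations unfolding KJ_char_map_def by blast
qed

lemma (in KJ_char_map) realizable_if_relations:
  "\<forall>\<alpha>\<in>I_J m J. char_map K {1..m} n (p \<alpha>) \<Longrightarrow>
   \<forall>\<alpha>\<in>I_J m J. relations m (p \<alpha>) = proj_relations m J \<Lambda> \<alpha> \<Longrightarrow> realizable K m n J p"
  unfolding realizable_def using char proj_rep_iff_relations by blast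

section \<open>Normal forms of realizations\<close>

definition diff_coords :: "nat \<Rightarrow> (nat \<Rightarrow> nat) \<Rightarrow> (nat \<Rightarrow> nat) \<Rightarrow> nat set" where
  "diff_coords m \<beta> \<alpha> = {i\<in>{1..m}. \<alpha> i \<noteq> \<beta> i}"

text \<open>The relation module predicted from that of \<open>P\<close> when the coordinates in \<open>D\<close> carry the
  coefficient rows \<open>f\<close>.\<close>

definition twisted_relations :: "nat \<Rightarrow> (nat \<Rightarrow> nat \<Rightarrow> 'r::comm_ring_1) \<Rightarrow> nat set \<Rightarrow> (nat \<Rightarrow> nat \<Rightarrow> 'r) \<Rightarrow> (nat \<Rightarrow> 'r) set" where
  "twisted_relations m P D f = {x. vanishes_outside m x \<and> (\<exists>z\<in>relations m P. (\<forall>i\<in>{1..m}-D. x i = z i) \<and>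
       (\<forall>j\<in>D. x j = - (\<Sum>i=1..m. f j i * z i)))}"

definition twist_injective :: "nat \<Rightarrow> (nat \<Rightarrow> nat \<Rightarrow> 'r::comm_ring_1) \<Rightarrow> nat set \<Rightarrow> (nat \<Rightarrow> nat \<Rightarrow> 'r) \<Rightarrow> bool" where
  "twist_injective m P D f \<longleftrightarrow> (\<forall>z\<in>relations m P. (\<forall>i\<in>{1..m}-D. z i = 0) \<and> (\<forall>j\<in>D. (\<Sum>i=1..m. f j i * z i) = 0) \<longrightarrow> (\<forall>i. z i = 0))"

definition twist :: "nat \<Rightarrow> nat set \<Rightarrow> (nat \<Rightarrow> nat \<Rightarrow> 'r::comm_ring_1) \<Rightarrow> (nat \<Rightarrow> 'r) \<Rightarrow> nat \<Rightarrow> 'r" where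
  "twist m D f z = (\<lambda>i. if i \<in> {1..m} then (if i \<in> D then - (\<Sum>i'=1..m. f i i' * z i') else z i) else 0)"

lemma twist_outside: "i \<notin> {1..m} \<Longrightarrow> twist m D f z i = 0"
  unfolding twist_def by (rule if_not_P)

lemma twist_on: "i \<in> D \<Longrightarrow> D \<subseteq> {1..m} \<Longrightarrow> twist m D f z i = - (\<Sum>i'=1..m. f i i' * z i')"
  unfolding twist_def by auto

lemma twist_off: "i \<in> {1..m} \<Longrightarrow> i \<notin> D \<Longrightarrow> twist m D f z i = z i"
  unfolding twist_def by auto

lemma twist_in_twisted_relations:
  "D \<subseteq> {1..m} \<Longrightarrow> z \<in> relations m P \<Longrightarrow> twist m D f z \<in> twisted_relations m P D f"
  unfolding twisted_relations_def twist_def vanishes_outside_def by (intro CollectI conjI bexI[of _ z]) auto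

text \<open>\<open>c j k\<close> is the coefficient row of the vertex \<open>(j, k)\<close> in a realization normalised at \<open>\<beta>\<close>.\<close>

definition normal_coeffs :: "nat \<Rightarrow> (nat \<Rightarrow> nat) \<Rightarrow> ((nat \<Rightarrow> nat) \<Rightarrow> nat \<Rightarrow> nat \<Rightarrow> 'r::comm_ring_1) \<Rightarrow> (nat \<Rightarrow> nat)
    \<Rightarrow> (nat \<Rightarrow> nat \<Rightarrow> nat \<Rightarrow> 'r) \<Rightarrow> bool" where
  "normal_coeffs m J q \<beta> c \<longleftrightarrow> (\<forall>\<alpha>\<in>I_J m J.
     relations m (q \<alpha>) = twisted_relations m (q \<beta>) (diff_coords m \<beta> \<alpha>) (\<lambda>j. c j (\<alpha> j)) \<and>
     twist_injective m (q \<beta>) (diff_coords m \<beta> \<alpha>) (\<lambda>j. c j (\<alpha> j)))"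

lemma diff_coords_subset: "diff_coords m \<beta> \<alpha> \<subseteq> {1..m}"
  unfolding diff_coords_def by auto

lemma finite_diff_coords: "finite (diff_coords m \<beta> \<alpha>)"
  using finite_subset[OF diff_coords_subset] by blast

lemma graph_on_diff_coords_subset:
  "\<alpha> \<in> I_J m J \<Longrightarrow> \<beta> \<in> I_J m J \<Longrightarrow> graph_on \<alpha> (diff_coords m \<beta> \<alpha>) \<subseteq> sigma_face m J \<beta>"
  unfolding graph_on_def diff_coords_def using sigma_face_iff I_J_mem by fastforce

lemma graph_on_diff_coords_subset':
  "\<alpha> \<in> I_J m J \<Longrightarrow> \<beta> \<in> I_J m J \<Longrightarrow> graph_on \<beta> (diff_coords m \<beta> \<alpha>) \<subseteq> sigma_face m J \<alpha>"
  unfolding graph_on_def diff_coords_def using sigma_face_iff I_J_mem by fastforce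

lemma sigma_face_diff_graph_on_commute:
  "sigma_face m J \<alpha> - graph_on \<beta> (diff_coords m \<beta> \<alpha>) = sigma_face m J \<beta> - graph_on \<alpha> (diff_coords m \<beta> \<alpha>)"
  unfolding graph_on_def diff_coords_def sigma_face_def KJ_verts_def by auto

context KJ_char_map
begin

context
  fixes \<beta> :: "nat \<Rightarrow> nat" and F :: "nat set" and q :: "(nat \<Rightarrow> nat) \<Rightarrow> nat \<Rightarrow> nat \<Rightarrow> 'r"
  assumes \<beta>: "\<beta> \<in> I_J m J" and F: "F \<in> K" "card F = n"
    and rel: "\<forall>\<alpha>\<in>I_J m J. relations m (q \<alpha>) = proj_relations m J \<Lambda> \<alpha>"
begin

abbreviation "base_coord \<equiv> coord N' (KJ_facet m J \<beta> F) \<Lambda>"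

definition base_comb :: "(nat \<Rightarrow> 'r) \<Rightarrow> nat \<Rightarrow> 'r" where
  "base_comb z = (\<lambda>r. \<Sum>i=1..m. z i * \<Lambda> (i, \<beta> i) r)"

definition extracted_coeffs :: "nat \<Rightarrow> nat \<Rightarrow> nat \<Rightarrow> 'r" where
  "extracted_coeffs j k i = base_coord (\<Lambda> (i, \<beta> i)) (j, k)"

lemma base_facet_basis: "is_basis N' (KJ_facet m J \<beta> F) \<Lambda>"
  using facet_basis[OF \<beta> F] .

lemma coord_base_comb: "base_coord (base_comb z) (j, k) = (\<Sum>i=1..m. extracted_coeffs j k i * z i)"
  unfolding base_comb_def extracted_coeffs_def
  by (subst coord_sum[OF base_facet_basis]) (use \<Lambda>_graph_vecs[OF \<beta>] in \<open>auto simp: mult.commute\<close>)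

lemma base_comb_rspan: "z \<in> relations m (q \<beta>) \<Longrightarrow> base_comb z \<in> rspan (sigma_face m J \<beta>) \<Lambda>"
  using rel \<beta> unfolding proj_relations_def base_comb_def by blast

lemma relations_if_base_comb_rspan:
  "vanishes_outside m z \<Longrightarrow> base_comb z \<in> rspan (sigma_face m J \<beta>) \<Lambda> \<Longrightarrow> z \<in> relations m (q \<beta>)"
  using rel \<beta> unfolding proj_relations_def base_comb_def by blast

context
  fixes \<alpha> :: "nat \<Rightarrow> nat"
  assumes \<alpha>: "\<alpha> \<in> I_J m J"
begin

abbreviation "D \<equiv> diff_coords m \<beta> \<alpha>"

lemma base_comb_decomp:
  assumes z: "z \<in> relations m (q \<beta>)"
  shows "base_comb z r = (\<Sum>j\<in>D. (\<Sum>i=1..m. extracted_coeffs j (\<alpha> j) i * z i) * \<Lambda> (j, \<alpha> j) r)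
           + (\<Sum>v\<in>sigma_face m J \<beta> - graph_on \<alpha> D. base_coord (base_comb z) v * \<Lambda> v r)"
proof -
  have "base_comb z r = (\<Sum>v\<in>sigma_face m J \<beta>. base_coord (base_comb z) v * \<Lambda> v r)"
    using coord_rspan(1)[OF base_facet_basis _ base_comb_rspan[OF z]] by (auto simp: KJ_facet_def dest: fun_cong)
  also have "\<dots> = (\<Sum>v\<in>graph_on \<alpha> D. base_coord (base_comb z) v * \<Lambda> v r)
           + (\<Sum>v\<in>sigma_face m J \<beta> - graph_on \<alpha> D. base_coord (base_comb z) v * \<Lambda> v r)"
    by (rule sum_split[OF finite_sigma_face graph_on_diff_coords_subset[OF \<alpha> \<beta>]])
  finally show ?thesis by (simp add: sum_graph_on coord_base_comb)
qed

lemma proj_relations_subset_twisted: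
  "proj_relations m J \<Lambda> \<alpha> \<subseteq> twisted_relations m (q \<beta>) D (\<lambda>j. extracted_coeffs j (\<alpha> j))"
proof
  fix x assume x: "x \<in> proj_relations m J \<Lambda> \<alpha>"
  then have x_out: "vanishes_outside m x" unfolding proj_relations_def by blast
  obtain y where y: "(\<lambda>r. \<Sum>i=1..m. x i * \<Lambda> (i, \<alpha> i) r) = (\<lambda>r. \<Sum>s\<in>sigma_face m J \<alpha>. y s * \<Lambda> s r)"
    using x unfolding proj_relations_def rspan_def lincomb_def by blast
  define z where "z = (\<lambda>i. if i \<in> D then - y (i, \<beta> i) else x i)"
  let ?S = "sigma_face m J \<alpha> - graph_on \<beta> D"
  let ?u = "\<lambda>r. \<Sum>s\<in>?S. y s * \<Lambda> s r" and ?v = "\<lambda>r. \<Sum>i\<in>D. x i * \<Lambda> (i, \<alpha> i) r"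
  have "vanishes_outside m z" using x_out diff_coords_subset[of m \<beta> \<alpha>] unfolding z_def vanishes_outside_def by auto
  have S_sub: "?S \<subseteq> sigma_face m J \<beta>" using sigma_face_diff_graph_on_commute by blast
  have z_comb: "base_comb z = (\<lambda>r. ?u r - ?v r)"
  proof
    fix r
    have "(\<Sum>i=1..m. x i * \<Lambda> (i, \<alpha> i) r)
        = ?v r + base_comb z r - (\<Sum>i\<in>D. z i * \<Lambda> (i, \<beta> i) r)"
      unfolding base_comb_def
      by (rule sum_replace_subset) (use diff_coords_subset in \<open>auto simp: z_def diff_coords_def\<close>)
    moreover have "(\<Sum>s\<in>sigma_face m J \<alpha>. y s * \<Lambda> s r) = (\<Sum>i\<in>D. y (i, \<beta> i) * \<Lambda> (i, \<beta> i) r) + ?u r"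
      using sum_split[OF finite_sigma_face graph_on_diff_coords_subset'[OF \<alpha> \<beta>]] by (simp add: sum_graph_on)
    moreover have "(\<Sum>i\<in>D. z i * \<Lambda> (i, \<beta> i) r) = - (\<Sum>i\<in>D. y (i, \<beta> i) * \<Lambda> (i, \<beta> i) r)"
      by (simp add: z_def sum_negf[symmetric])
    ultimately show "base_comb z r = ?u r - ?v r" using fun_cong[OF y, of r] by (simp add: algebra_simps)
  qed
  have "base_comb z \<in> rspan (sigma_face m J \<beta>) \<Lambda>"
    unfolding z_comb using S_sub graph_on_diff_coords_subset[OF \<alpha> \<beta>]
    by (intro rspan_diff rspan_lincomb[where g = id, simplified] rspan_lincomb)
      (auto simp: finite_sigma_face finite_diff_coords graph_on_def intro: finite_subset)
  then have z: "z \<in> relations m (q \<beta>)"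
    using relations_if_base_comb_rspan \<open>vanishes_outside m z\<close> by blast
  have "base_coord (base_comb z) (j, \<alpha> j) = - x j" if j: "j \<in> D" for j
  proof -
    have "base_coord ?u (j, \<alpha> j) = 0"
      using coord_lincomb_notin[OF base_facet_basis, of ?S id "(j, \<alpha> j)" y] S_sub
        graph_point_notin_sigma_face[of j \<alpha> m J]
      by (auto simp: KJ_facet_def finite_sigma_face)
    moreover have "base_coord ?v (j, \<alpha> j) = x j"
      using coord_lincomb_in[OF base_facet_basis finite_diff_coords[of m \<beta> \<alpha>], of "\<lambda>i. (i, \<alpha> i)" j x] j
        graph_on_diff_coords_subset[OF \<alpha> \<beta>]
      by (auto simp: inj_on_def KJ_facet_def graph_on_def)
    ultimately show ?thesis
      unfolding z_comb using \<Lambda>_sigma_face_vecs \<Lambda>_graph_vecs[OF \<alpha>] diff_coords_subset[of m \<beta> \<alpha>]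
      by (subst coord_diff[OF base_facet_basis]) (auto intro!: vecs_sum)
  qed
  then have "\<forall>j\<in>D. x j = - (\<Sum>i=1..m. extracted_coeffs j (\<alpha> j) i * z i)"
    by (metis coord_base_comb minus_minus)
  then show "x \<in> twisted_relations m (q \<beta>) D (\<lambda>j. extracted_coeffs j (\<alpha> j))"
    unfolding twisted_relations_def using x_out z by (intro CollectI conjI bexI[of _ z]) (auto simp: z_def)
qed

lemma twisted_subset_proj_relations:
  "twisted_relations m (q \<beta>) D (\<lambda>j. extracted_coeffs j (\<alpha> j)) \<subseteq> proj_relations m J \<Lambda> \<alpha>"
proof
  fix x assume "x \<in> twisted_relations m (q \<beta>) D (\<lambda>j. extracted_coeffs j (\<alpha> j))"
  then obtain z where x_out: "vanishes_outside m x" and z: "z \<in> relations m (q \<beta>)"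
    and x_off: "\<forall>i\<in>{1..m}-D. x i = z i" and x_on: "\<forall>j\<in>D. x j = - (\<Sum>i=1..m. extracted_coeffs j (\<alpha> j) i * z i)"
    unfolding twisted_relations_def by blast
  let ?S = "sigma_face m J \<beta> - graph_on \<alpha> D"
  let ?u = "\<lambda>r. \<Sum>v\<in>?S. base_coord (base_comb z) v * \<Lambda> v r" and ?v = "\<lambda>r. \<Sum>i\<in>D. z i * \<Lambda> (i, \<beta> i) r"
  have "(\<Sum>i=1..m. x i * \<Lambda> (i, \<alpha> i) r) = ?u r - ?v r" for r
  proof -
    have "(\<Sum>i=1..m. x i * \<Lambda> (i, \<alpha> i) r) = (\<Sum>i\<in>D. x i * \<Lambda> (i, \<alpha> i) r) + base_comb z r - ?v r"
      unfolding base_comb_def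
      by (rule sum_replace_subset) (use diff_coords_subset x_off in \<open>auto simp: diff_coords_def\<close>)
    moreover have "(\<Sum>i\<in>D. x i * \<Lambda> (i, \<alpha> i) r)
        = - (\<Sum>j\<in>D. (\<Sum>i=1..m. extracted_coeffs j (\<alpha> j) i * z i) * \<Lambda> (j, \<alpha> j) r)"
      unfolding sum_negf[symmetric] by (rule sum.cong) (simp_all add: x_on)
    ultimately show ?thesis
      using base_comb_decomp[OF z, of r] by simp
  qed
  moreover have "(\<lambda>r. ?u r - ?v r) \<in> rspan (sigma_face m J \<alpha>) \<Lambda>"
    using sigma_face_diff_graph_on_commute[of m J \<alpha> \<beta>] graph_on_diff_coords_subset'[OF \<alpha> \<beta>]
    by (intro rspan_diff rspan_lincomb[where g = id, simplified] rspan_lincomb)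
      (auto simp: finite_sigma_face finite_diff_coords graph_on_def intro: finite_subset)
  ultimately show "x \<in> proj_relations m J \<Lambda> \<alpha>"
    unfolding proj_relations_def using x_out by auto
qed

text \<open>Compare the two expressions for \<open>base_comb z\<close> in the facet basis at \<open>\<alpha>\<close>, at the vertices
  \<open>(i, \<beta> i)\<close>, \<open>i \<in> D\<close>.\<close>

lemma twist_injective_extracted: "twist_injective m (q \<beta>) D (\<lambda>j. extracted_coeffs j (\<alpha> j))"
  unfolding twist_injective_def
proof (intro ballI impI allI)
  fix z i assume z: "z \<in> relations m (q \<beta>)"
    and h: "(\<forall>i\<in>{1..m}-D. z i = 0) \<and> (\<forall>j\<in>D. (\<Sum>i=1..m. extracted_coeffs j (\<alpha> j) i * z i) = 0)"
  let ?S = "sigma_face m J \<beta> - graph_on \<alpha> D"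
  let ?coord = "coord N' (KJ_facet m J \<alpha> F) \<Lambda>"
  have basis: "is_basis N' (KJ_facet m J \<alpha> F) \<Lambda>" using facet_basis[OF \<alpha> F] .
  have "base_comb z = (\<lambda>r. \<Sum>i\<in>D. z i * \<Lambda> (i, \<beta> i) r)"
    unfolding base_comb_def
    by (intro ext sum.mono_neutral_right) (use h diff_coords_subset in auto)
  moreover have "base_comb z = (\<lambda>r. \<Sum>v\<in>?S. base_coord (base_comb z) v * \<Lambda> v r)"
    using base_comb_decomp[OF z] h by auto
  ultimately have eq: "(\<lambda>r. \<Sum>i\<in>D. z i * \<Lambda> (i, \<beta> i) r) = (\<lambda>r. \<Sum>v\<in>?S. base_coord (base_comb z) v * \<Lambda> v r)"
    by simp
  show "z i = 0"
  proof (cases "i \<in> D")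
    case True
    have "?coord (\<lambda>r. \<Sum>i\<in>D. z i * \<Lambda> (i, \<beta> i) r) (i, \<beta> i) = z i"
      using coord_lincomb_in[OF basis finite_diff_coords[of m \<beta> \<alpha>], of "\<lambda>i. (i, \<beta> i)" i z] True
        graph_on_diff_coords_subset'[OF \<alpha> \<beta>]
      by (auto simp: inj_on_def KJ_facet_def graph_on_def)
    moreover have "?coord (\<lambda>r. \<Sum>v\<in>?S. base_coord (base_comb z) v * \<Lambda> v r) (i, \<beta> i) = 0"
      using coord_lincomb_notin[OF basis, of ?S id "(i, \<beta> i)" "base_coord (base_comb z)"]
        graph_point_notin_sigma_face[of i \<beta> m J] sigma_face_diff_graph_on_commute[of m J \<alpha> \<beta>]
      by (auto simp: KJ_facet_def finite_sigma_face)
    ultimately show ?thesis using eq by simp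
  next
    case False
    then show ?thesis
      using h relations_vanishes_outside[OF z] unfolding vanishes_outside_def by blast
  qed
qed

end

lemma normal_coeffs_extracted: "normal_coeffs m J q \<beta> extracted_coeffs"
  unfolding normal_coeffs_def
  using proj_relations_subset_twisted twisted_subset_proj_relations twist_injective_extracted rel
  by blast

end

lemma normal_coeffs_of_realization:
  assumes "\<beta> \<in> I_J m J" and "\<forall>\<alpha>\<in>I_J m J. relations m (q \<alpha>) = proj_relations m J \<Lambda> \<alpha>"
  shows "\<exists>c. normal_coeffs m J q \<beta> c"
  using normal_coeffs_extracted[OF assms(1) _ _ assms(2)] pure_complex_facet[OF pure pure_complex_empty[OF pure]]
  by blast

end

section \<open>Realizations from coefficient systems\<close>

locale normal_realization =
  fixes K :: "nat set set" and m n :: nat and J :: "nat \<Rightarrow> nat" and \<beta> :: "nat \<Rightarrow> nat"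
    and idx :: "nat \<times> nat \<Rightarrow> nat"
    and q :: "(nat \<Rightarrow> nat) \<Rightarrow> nat \<Rightarrow> nat \<Rightarrow> 'r::comm_ring_1" and cfun :: "nat \<Rightarrow> nat \<Rightarrow> nat \<Rightarrow> 'r"
  assumes pure: "pure_complex K m n" and J_pos: "\<forall>i\<in>{1..m}. 1 \<le> J i" and \<beta>: "\<beta> \<in> I_J m J"
    and chars: "\<forall>\<alpha>\<in>I_J m J. char_map K {1..m} n (q \<alpha>)"
    and idx: "bij_betw idx (sigma_face m J \<beta>) {n..<dimJ m n J}"
begin

abbreviation "N' \<equiv> dimJ m n J"
abbreviation "\<sigma>\<beta> \<equiv> sigma_face m J \<beta>"
abbreviation "P\<beta> \<equiv> q \<beta>"
abbreviation "verts \<equiv> KJ_verts m J"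

definition coeff :: "nat \<times> nat \<Rightarrow> nat \<Rightarrow> 'r" where
  "coeff u i = cfun (fst u) (snd u) i"

definition unit_at :: "nat \<times> nat \<Rightarrow> nat \<Rightarrow> 'r" where
  "unit_at u = (\<lambda>r. if r = idx u then 1 else 0)"

text \<open>The normal form at \<open>\<beta>\<close>: \<open>\<sigma>(\<beta>)\<close> goes to the standard basis of the last \<open>N' - n\<close>
  coordinates and the vertex \<open>(i, \<beta> i)\<close> to \<open>P\<beta> i\<close> plus the column \<open>i\<close> of the coefficient rows.\<close>

definition Lam :: "nat \<times> nat \<Rightarrow> nat \<Rightarrow> 'r" where
  "Lam v = (if v \<in> \<sigma>\<beta> then unit_at v else (\<lambda>r. P\<beta> (fst v) r + (\<Sum>u\<in>\<sigma>\<beta>. coeff u (fst v) * unit_at u r)))"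

definition Lam_comb :: "(nat \<times> nat \<Rightarrow> 'r) \<Rightarrow> nat \<Rightarrow> 'r" where
  "Lam_comb a = (\<lambda>r. \<Sum>v\<in>verts. a v * Lam v r)"

definition base_part :: "(nat \<times> nat \<Rightarrow> 'r) \<Rightarrow> nat \<Rightarrow> 'r" where
  "base_part a = (\<lambda>i. if i \<in> {1..m} then a (i, \<beta> i) else 0)"

lemma idx_range: "u \<in> \<sigma>\<beta> \<Longrightarrow> n \<le> idx u \<and> idx u < N'"
  using idx unfolding bij_betw_def by auto

lemma idx_inj: "u \<in> \<sigma>\<beta> \<Longrightarrow> u' \<in> \<sigma>\<beta> \<Longrightarrow> idx u = idx u' \<Longrightarrow> u = u'"
  using idx unfolding bij_betw_def inj_on_def by blast

lemma idx_onto: "n \<le> r \<Longrightarrow> r < N' \<Longrightarrow> \<exists>u\<in>\<sigma>\<beta>. r = idx u"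
  using idx unfolding bij_betw_def by (metis atLeastLessThan_iff imageE)

lemma n_le_N': "n \<le> N'"
  unfolding dimJ_def by simp

lemma char_q: "\<alpha> \<in> I_J m J \<Longrightarrow> char_map K {1..m} n (q \<alpha>)"
  using chars by blast

lemma P\<beta>_vecs: "i \<in> {1..m} \<Longrightarrow> P\<beta> i \<in> vecs n"
  using char_q[OF \<beta>] unfolding char_map_def by blast

lemma P\<beta>_high: "i \<in> {1..m} \<Longrightarrow> n \<le> r \<Longrightarrow> P\<beta> i r = 0"
  using P\<beta>_vecs vecsD by blast

lemma base_vertex_in_verts: "i \<in> {1..m} \<Longrightarrow> (i, \<beta> i) \<in> verts"
  using I_J_mem[OF \<beta>] KJ_verts_iff by auto

lemma notin_\<sigma>\<beta>: "v \<in> verts \<Longrightarrow> v \<notin> \<sigma>\<beta> \<Longrightarrow> fst v \<in> {1..m} \<and> v = (fst v, \<beta> (fst v))"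
  unfolding sigma_face_def KJ_verts_def by auto

lemma sum_verts_split: "(\<Sum>v\<in>verts. g v) = (\<Sum>u\<in>\<sigma>\<beta>. g u) + (\<Sum>i=1..m. g (i, \<beta> i) :: 'r)"
proof -
  have verts: "verts = \<sigma>\<beta> \<union> graph_on \<beta> {1..m}"
    using base_vertex_in_verts unfolding sigma_face_def graph_on_def by auto
  have "(\<Sum>v\<in>verts. g v) = (\<Sum>u\<in>\<sigma>\<beta>. g u) + (\<Sum>v\<in>graph_on \<beta> {1..m}. g v)"
    unfolding verts
    by (rule sum.union_disjoint)
      (use finite_sigma_face sigma_face_graph_on_disjoint[of "{1..m}" m J \<beta>] in \<open>auto simp: graph_on_def\<close>)
  then show ?thesis by (simp add: sum_graph_on)
qed

lemma Lam_\<sigma>\<beta>: "u \<in> \<sigma>\<beta> \<Longrightarrow> Lam u = unit_at u"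
  unfolding Lam_def by simp

lemma Lam_base_vertex: "Lam (i, \<beta> i) r = P\<beta> i r + (\<Sum>u\<in>\<sigma>\<beta>. coeff u i * unit_at u r)"
  unfolding Lam_def using graph_point_notin_sigma_face[of i \<beta> m J] by simp

lemma unit_at_low: "u \<in> \<sigma>\<beta> \<Longrightarrow> r < n \<Longrightarrow> unit_at u r = 0"
  unfolding unit_at_def using idx_range by fastforce

lemma unit_at_high: "u \<in> \<sigma>\<beta> \<Longrightarrow> N' \<le> r \<Longrightarrow> unit_at u r = 0"
  unfolding unit_at_def using idx_range by fastforce

lemma sum_\<sigma>\<beta>_unit_at: "u0 \<in> \<sigma>\<beta> \<Longrightarrow> (\<Sum>u\<in>\<sigma>\<beta>. a u * unit_at u (idx u0)) = a u0"
proof -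
  assume u0: "u0 \<in> \<sigma>\<beta>"
  have "(\<Sum>u\<in>\<sigma>\<beta>. a u * unit_at u (idx u0)) = (\<Sum>u\<in>\<sigma>\<beta>. if u0 = u then a u else 0)"
    by (rule sum.cong) (use u0 idx_inj in \<open>auto simp: unit_at_def\<close>)
  then show ?thesis using u0 finite_sigma_face by simp
qed

lemma Lam_comb_low: "r < n \<Longrightarrow> Lam_comb a r = (\<Sum>i=1..m. base_part a i * P\<beta> i r)"
proof -
  assume r: "r < n"
  have "Lam_comb a r = (\<Sum>u\<in>\<sigma>\<beta>. a u * Lam u r) + (\<Sum>i=1..m. a (i, \<beta> i) * Lam (i, \<beta> i) r)"
    unfolding Lam_comb_def by (rule sum_verts_split)
  moreover have "(\<Sum>u\<in>\<sigma>\<beta>. a u * Lam u r) = 0" using unit_at_low[OF _ r] Lam_\<sigma>\<beta> by simp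
  moreover have "Lam (i, \<beta> i) r = P\<beta> i r" for i using unit_at_low[OF _ r] Lam_base_vertex by simp
  ultimately show ?thesis unfolding base_part_def by simp
qed

lemma Lam_comb_at_idx:
  "u0 \<in> \<sigma>\<beta> \<Longrightarrow> Lam_comb a (idx u0) = a u0 + (\<Sum>i=1..m. coeff u0 i * base_part a i)"
proof -
  assume u0: "u0 \<in> \<sigma>\<beta>"
  have "Lam_comb a (idx u0) = (\<Sum>u\<in>\<sigma>\<beta>. a u * Lam u (idx u0)) + (\<Sum>i=1..m. a (i, \<beta> i) * Lam (i, \<beta> i) (idx u0))"
    unfolding Lam_comb_def by (rule sum_verts_split)
  moreover have "(\<Sum>u\<in>\<sigma>\<beta>. a u * Lam u (idx u0)) = a u0"
    using sum_\<sigma>\<beta>_unit_at[OF u0, of a] Lam_\<sigma>\<beta> by simp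
  moreover have "Lam (i, \<beta> i) (idx u0) = coeff u0 i" if "i \<in> {1..m}" for i
    unfolding Lam_base_vertex using P\<beta>_high[OF that] idx_range[OF u0] sum_\<sigma>\<beta>_unit_at[OF u0, of "\<lambda>u. coeff u i"]
    by simp
  ultimately show ?thesis unfolding base_part_def by (simp add: mult.commute)
qed

lemma Lam_high: "v \<in> verts \<Longrightarrow> N' \<le> r \<Longrightarrow> Lam v r = 0"
proof (cases "v \<in> \<sigma>\<beta>")
  case True
  then show "N' \<le> r \<Longrightarrow> Lam v r = 0" using unit_at_high Lam_\<sigma>\<beta> by simp
next
  case False
  assume "v \<in> verts" "N' \<le> r"
  then have "fst v \<in> {1..m}" "v = (fst v, \<beta> (fst v))" "n \<le> r" using notin_\<sigma>\<beta> False n_le_N' by auto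
  then show ?thesis using Lam_base_vertex[of "fst v" r] unit_at_high[OF _ \<open>N' \<le> r\<close>] P\<beta>_high by simp
qed

lemma Lam_comb_vecs: "Lam_comb a \<in> vecs N'"
  using Lam_high unfolding vecs_def Lam_comb_def by auto

lemma Lam_vecs: "v \<in> verts \<Longrightarrow> Lam v \<in> vecs N'"
  using Lam_high unfolding vecs_def by auto

lemma Lam_comb_eqI:
  assumes y: "y \<in> vecs N'" and low: "\<forall>r<n. y r = (\<Sum>i=1..m. base_part a i * P\<beta> i r)"
    and high: "\<forall>u\<in>\<sigma>\<beta>. y (idx u) = a u + (\<Sum>i=1..m. coeff u i * base_part a i)"
  shows "y = Lam_comb a"
proof
  fix r
  consider "r < n" | "n \<le> r" "r < N'" | "N' \<le> r" by linarith
  then show "y r = Lam_comb a r"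
  proof cases
    case 1 then show ?thesis using low Lam_comb_low by simp
  next
    case 2
    then obtain u where "u \<in> \<sigma>\<beta>" "r = idx u" using idx_onto by blast
    then show ?thesis using high Lam_comb_at_idx by simp
  next
    case 3 then show ?thesis using y Lam_comb_vecs vecsD by metis
  qed
qed

lemma Lam_comb_zero_base_part:
  assumes a: "Lam_comb a = (\<lambda>r. 0)"
  shows "base_part a \<in> relations m P\<beta>"
proof -
  have "(\<Sum>i=1..m. base_part a i * P\<beta> i r) = 0" for r
  proof (cases "r < n")
    case True then show ?thesis using Lam_comb_low[OF True, of a] a by simp
  qed (simp add: P\<beta>_high)
  then show ?thesis unfolding relations_def vanishes_outside_def by (simp add: base_part_def)
qed

lemma Lam_comb_zero_at:
  "Lam_comb a = (\<lambda>r. 0) \<Longrightarrow> u \<in> \<sigma>\<beta> \<Longrightarrow> a u = - (\<Sum>i=1..m. coeff u i * base_part a i)"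
  using Lam_comb_at_idx[of u a] by (simp add: eq_neg_iff_add_eq_0)

lemma lincomb_Lam_comb:
  assumes "S \<subseteq> verts" "\<forall>v. v \<notin> S \<longrightarrow> a v = 0"
  shows "lincomb S a Lam = Lam_comb a"
  unfolding lincomb_def Lam_comb_def
  by (rule ext, rule sum.mono_neutral_left) (use assms finite_KJ_verts in auto)

lemma Lam_comb_diff: "Lam_comb (\<lambda>v. a v - b v) = (\<lambda>r. Lam_comb a r - Lam_comb b r)"
  unfolding Lam_comb_def by (auto simp: left_diff_distrib sum_subtractf)

lemma coeff_at: "coeff (j, k) i = cfun j k i"
  unfolding coeff_def by simp

context
  fixes \<alpha> :: "nat \<Rightarrow> nat"
  assumes \<alpha>: "\<alpha> \<in> I_J m J"
begin

abbreviation "D \<equiv> diff_coords m \<beta> \<alpha>"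
abbreviation "rows \<equiv> \<lambda>j. cfun j (\<alpha> j)"

lemma diff_vertex_in_\<sigma>\<beta>: "j \<in> D \<Longrightarrow> (j, \<alpha> j) \<in> \<sigma>\<beta>"
  using graph_on_diff_coords_subset[OF \<alpha> \<beta>] unfolding graph_on_def by blast

definition graph_coeffs :: "(nat \<Rightarrow> 'r) \<Rightarrow> nat \<times> nat \<Rightarrow> 'r" where
  "graph_coeffs x = (\<lambda>v. if v \<in> graph_on \<alpha> {1..m} then x (fst v) else 0)"

lemma sum_graph_Lam: "(\<lambda>r. \<Sum>i=1..m. x i * Lam (i, \<alpha> i) r) = Lam_comb (graph_coeffs x)"
proof
  fix r
  have graph_verts: "graph_on \<alpha> {1..m} \<subseteq> verts"
    using I_J_mem[OF \<alpha>] unfolding graph_on_def by (auto simp: KJ_verts_def)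
  have "Lam_comb (graph_coeffs x) r = (\<Sum>v\<in>verts. if v \<in> graph_on \<alpha> {1..m} then x (fst v) * Lam v r else 0)"
    unfolding Lam_comb_def graph_coeffs_def by (rule sum.cong) auto
  also have "\<dots> = (\<Sum>v\<in>graph_on \<alpha> {1..m}. x (fst v) * Lam v r)"
    by (rule sum_if_sub[OF finite_KJ_verts graph_verts])
  also have "\<dots> = (\<Sum>i=1..m. x i * Lam (i, \<alpha> i) r)"
    by (simp add: sum_graph_on)
  finally show "(\<Sum>i=1..m. x i * Lam (i, \<alpha> i) r) = Lam_comb (graph_coeffs x) r" by simp
qed

lemma rspan_Lam_comb:
  "y \<in> rspan (sigma_face m J \<alpha>) Lam \<longleftrightarrow> (\<exists>a. (\<forall>v. v \<notin> sigma_face m J \<alpha> \<longrightarrow> a v = 0) \<and> y = Lam_comb a)"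
proof
  assume "y \<in> rspan (sigma_face m J \<alpha>) Lam"
  then obtain c where c: "y = lincomb (sigma_face m J \<alpha>) c Lam" unfolding rspan_def by blast
  let ?a = "\<lambda>v. if v \<in> sigma_face m J \<alpha> then c v else 0"
  have "lincomb (sigma_face m J \<alpha>) c Lam = lincomb (sigma_face m J \<alpha>) ?a Lam"
    unfolding lincomb_def by (rule ext, rule sum.cong) auto
  also have "\<dots> = Lam_comb ?a" by (rule lincomb_Lam_comb) (use sigma_face_subset_verts in auto)
  finally show "\<exists>a. (\<forall>v. v \<notin> sigma_face m J \<alpha> \<longrightarrow> a v = 0) \<and> y = Lam_comb a"
    using c by (intro exI[of _ ?a]) auto
next
  assume "\<exists>a. (\<forall>v. v \<notin> sigma_face m J \<alpha> \<longrightarrow> a v = 0) \<and> y = Lam_comb a"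
  then obtain a where "\<forall>v. v \<notin> sigma_face m J \<alpha> \<longrightarrow> a v = 0" "y = Lam_comb a" by blast
  then have "y = lincomb (sigma_face m J \<alpha>) a Lam"
    using lincomb_Lam_comb[OF sigma_face_subset_verts] by simp
  then show "y \<in> rspan (sigma_face m J \<alpha>) Lam" unfolding rspan_def by blast
qed

lemma proj_relations_Lam_subset: "proj_relations m J Lam \<alpha> \<subseteq> twisted_relations m P\<beta> D rows"
proof
  fix x assume "x \<in> proj_relations m J Lam \<alpha>"
  then obtain b where x_out: "vanishes_outside m x" and b_out: "\<forall>v. v \<notin> sigma_face m J \<alpha> \<longrightarrow> b v = 0"
    and b: "Lam_comb (graph_coeffs x) = Lam_comb b"
    unfolding proj_relations_def sum_graph_Lam rspan_Lam_comb by blast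
  define a where "a = (\<lambda>v. graph_coeffs x v - b v)"
  have comb0: "Lam_comb a = (\<lambda>r. 0)"
    using b unfolding a_def Lam_comb_diff by simp
  have z: "base_part a \<in> relations m P\<beta>" using Lam_comb_zero_base_part[OF comb0] .
  have "x = twist m D rows (base_part a)"
  proof
    fix i
    consider "i \<notin> {1..m}" | "i \<in> {1..m} - D" | "i \<in> D" by blast
    then show "x i = twist m D rows (base_part a) i"
    proof cases
      case 1
      then have "x i = 0" using x_out unfolding vanishes_outside_def by blast
      then show ?thesis using 1 by (simp add: twist_outside)
    next
      case 2
      then have "(i, \<beta> i) \<notin> sigma_face m J \<alpha>" "\<alpha> i = \<beta> i"
        using graph_point_notin_sigma_face[of i \<alpha> m J] unfolding diff_coords_def by auto
      moreover have "twist m D rows (base_part a) i = base_part a i"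
        using 2 by (simp add: twist_off)
      ultimately show ?thesis
        using 2 b_out unfolding base_part_def a_def graph_coeffs_def graph_on_def by auto
    next
      case 3
      have "(i, \<alpha> i) \<in> graph_on \<alpha> {1..m}"
        using 3 diff_coords_subset[of m \<beta> \<alpha>] unfolding graph_on_def by blast
      moreover have "b (i, \<alpha> i) = 0" using b_out graph_point_notin_sigma_face by blast
      ultimately have "a (i, \<alpha> i) = x i" unfolding a_def graph_coeffs_def by simp
      then show ?thesis
        using Lam_comb_zero_at[OF comb0 diff_vertex_in_\<sigma>\<beta>[OF 3]]
        by (simp add: twist_on[OF 3 diff_coords_subset] coeff_at)
    qed
  qed
  then show "x \<in> twisted_relations m P\<beta> D rows"
    using twist_in_twisted_relations[OF diff_coords_subset z] by simp
qed

text \<open>Coefficients over \<open>\<sigma>(\<alpha>)\<close> expressing \<open>\<Sum>\<^sub>i x i \<Lambda>(i, \<alpha> i)\<close> when \<open>x\<close> is the twist of \<open>z\<close>.\<close>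

definition span_witness :: "(nat \<Rightarrow> 'r) \<Rightarrow> nat \<times> nat \<Rightarrow> 'r" where
  "span_witness z = (\<lambda>v. if v \<in> sigma_face m J \<alpha> then
     (if v \<in> \<sigma>\<beta> then (\<Sum>i=1..m. coeff v i * z i) else - z (fst v)) else 0)"

context
  fixes x z :: "nat \<Rightarrow> 'r"
  assumes z: "z \<in> relations m P\<beta>"
    and x_off: "\<forall>i\<in>{1..m}-D. x i = z i" and x_on: "\<forall>j\<in>D. x j = - (\<Sum>i=1..m. rows j i * z i)"
begin

lemma base_part_span_witness: "base_part (\<lambda>v. graph_coeffs x v - span_witness z v) = z"
  (is "base_part ?a = z")
proof
  fix i
  show "base_part ?a i = z i"
  proof (cases "i \<in> {1..m}")
    case True
    have not_\<sigma>\<beta>: "(i, \<beta> i) \<notin> \<sigma>\<beta>" using graph_point_notin_sigma_face .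
    show ?thesis
    proof (cases "i \<in> D")
      case in_D: True
      then have "(i, \<beta> i) \<in> sigma_face m J \<alpha>"
        using graph_on_diff_coords_subset'[OF \<alpha> \<beta>] unfolding graph_on_def by blast
      moreover have "(i, \<beta> i) \<notin> graph_on \<alpha> {1..m}"
        using in_D unfolding graph_on_def diff_coords_def by auto
      ultimately show ?thesis
        using True not_\<sigma>\<beta> unfolding base_part_def span_witness_def graph_coeffs_def by simp
    next
      case False
      then have "\<alpha> i = \<beta> i" using True unfolding diff_coords_def by blast
      then have "(i, \<beta> i) \<notin> sigma_face m J \<alpha>" "(i, \<beta> i) \<in> graph_on \<alpha> {1..m}"
        using True graph_point_notin_sigma_face[of i \<alpha> m J] unfolding graph_on_def by auto
      then show ?thesis
        using True False x_off unfolding base_part_def span_witness_def graph_coeffs_def by simp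
    qed
  next
    case False
    then have "z i = 0" using relations_vanishes_outside[OF z] unfolding vanishes_outside_def by blast
    then show ?thesis unfolding base_part_def by (simp only: if_not_P[OF False])
  qed
qed

lemma Lam_comb_span_witness: "Lam_comb (graph_coeffs x) = Lam_comb (span_witness z)"
proof -
  let ?a = "\<lambda>v. graph_coeffs x v - span_witness z v"
  note base = base_part_span_witness
  have "(\<lambda>r. 0) = Lam_comb ?a"
  proof (rule Lam_comb_eqI[OF zero_vecs])
    show "\<forall>r<n. 0 = (\<Sum>i=1..m. base_part ?a i * P\<beta> i r)" using relationsD[OF z] base by simp
    show "\<forall>u\<in>\<sigma>\<beta>. 0 = ?a u + (\<Sum>i=1..m. coeff u i * base_part ?a i)"
    proof
      fix u assume u: "u \<in> \<sigma>\<beta>"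
      show "0 = ?a u + (\<Sum>i=1..m. coeff u i * base_part ?a i)"
      proof (cases "u \<in> sigma_face m J \<alpha>")
        case True
        then have "u \<notin> graph_on \<alpha> {1..m}" using graph_point_notin_sigma_face unfolding graph_on_def by blast
        then show ?thesis using True u base unfolding span_witness_def graph_coeffs_def by simp
      next
        case False
        define j where "j = fst u"
        have j: "j \<in> {1..m}" "u = (j, \<alpha> j)"
          using notin_sigma_face[OF subsetD[OF sigma_face_subset_verts u] False] unfolding j_def by auto
        then have "j \<in> D" using u sigma_face_iff[OF \<beta>] unfolding diff_coords_def by auto
        moreover have "u \<in> graph_on \<alpha> {1..m}" using j unfolding graph_on_def by auto
        ultimately show ?thesis
          using False x_on j base unfolding span_witness_def graph_coeffs_def by (simp add: coeff_at)
      qed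
    qed
  qed
  then have eq0: "(\<lambda>r. 0) = (\<lambda>r. Lam_comb (graph_coeffs x) r - Lam_comb (span_witness z) r)"
    unfolding Lam_comb_diff .
  show ?thesis
  proof
    fix r show "Lam_comb (graph_coeffs x) r = Lam_comb (span_witness z) r" using fun_cong[OF eq0, of r] by simp
  qed
qed

end

lemma twisted_subset_proj_relations_Lam: "twisted_relations m P\<beta> D rows \<subseteq> proj_relations m J Lam \<alpha>"
proof
  fix x assume "x \<in> twisted_relations m P\<beta> D rows"
  then obtain z where x_out: "vanishes_outside m x" and z: "z \<in> relations m P\<beta>"
    and x_off: "\<forall>i\<in>{1..m}-D. x i = z i" and x_on: "\<forall>j\<in>D. x j = - (\<Sum>i=1..m. rows j i * z i)"
    unfolding twisted_relations_def by blast
  then show "x \<in> proj_relations m J Lam \<alpha>"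
    unfolding proj_relations_def sum_graph_Lam rspan_Lam_comb using Lam_comb_span_witness[OF z x_off x_on]
    by (intro CollectI conjI exI[of _ "span_witness z"]) (auto simp: span_witness_def)
qed

lemma proj_relations_Lam: "proj_relations m J Lam \<alpha> = twisted_relations m P\<beta> D rows"
  using proj_relations_Lam_subset twisted_subset_proj_relations_Lam by blast

context
  fixes F :: "nat set"
  assumes normal: "normal_coeffs m J q \<beta> cfun" and F: "F \<in> K" "card F = n"
begin

abbreviation "G \<equiv> KJ_facet m J \<alpha> F"

lemma F_subset: "F \<subseteq> {1..m}"
  using pure_complex_face_subset[OF pure F(1)] .

lemma G_subset_verts: "G \<subseteq> verts"
  using sigma_face_subset_verts I_J_mem[OF \<alpha>] F_subset
  unfolding KJ_facet_def graph_on_def by (auto simp: KJ_verts_def)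

lemma base_vertex_in_G: "i \<in> {1..m} \<Longrightarrow> (i, \<beta> i) \<in> G \<longleftrightarrow> i \<in> D \<union> F"
  using I_J_mem[OF \<beta>] unfolding KJ_facet_def graph_on_def diff_coords_def sigma_face_def KJ_verts_def by auto

lemma \<sigma>\<beta>_notin_G: "u \<in> \<sigma>\<beta> \<Longrightarrow> u \<notin> G \<longleftrightarrow> (\<exists>j\<in>D - F. u = (j, \<alpha> j))"
  unfolding KJ_facet_def graph_on_def diff_coords_def sigma_face_def KJ_verts_def by auto

lemma q\<alpha>_basis: "is_basis n F (q \<alpha>)"
  using char_q[OF \<alpha>] F unfolding char_map_def by blast

lemma relations_q\<alpha>: "relations m (q \<alpha>) = twisted_relations m P\<beta> D rows"
  using normal[unfolded normal_coeffs_def, rule_format, OF \<alpha>] by (rule conjunct1)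

lemma twist_injective_rows: "twist_injective m P\<beta> D rows"
  using normal[unfolded normal_coeffs_def, rule_format, OF \<alpha>] by (rule conjunct2)

lemma twist_in_relations: "z \<in> relations m P\<beta> \<Longrightarrow> twist m D rows z \<in> relations m (q \<alpha>)"
  unfolding relations_q\<alpha> by (rule twist_in_twisted_relations[OF diff_coords_subset])

lemma twist_base_part_outside_facet:
  assumes a_out: "\<forall>v. v \<notin> G \<longrightarrow> a v = 0" and comb0: "Lam_comb a = (\<lambda>r. 0)" and i: "i \<notin> F"
  shows "twist m D rows (base_part a) i = 0"
proof (cases "i \<in> D")
  case True
  have u: "(i, \<alpha> i) \<in> \<sigma>\<beta>" using diff_vertex_in_\<sigma>\<beta>[OF True] .
  have "(i, \<alpha> i) \<notin> G" by (subst \<sigma>\<beta>_notin_G[OF u]) (use True i in blast)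
  then have "a (i, \<alpha> i) = 0" using a_out by blast
  then show ?thesis
    using Lam_comb_zero_at[OF comb0 u] by (simp add: twist_on[OF True diff_coords_subset] coeff_at)
next
  case False
  show ?thesis
  proof (cases "i \<in> {1..m}")
    case True
    then have "(i, \<beta> i) \<notin> G" using base_vertex_in_G False i by blast
    then show ?thesis using a_out True False by (simp add: twist_off base_part_def)
  qed (erule twist_outside)
qed

lemma facet_independent:
  assumes a_out: "\<forall>v. v \<notin> G \<longrightarrow> a v = 0" and a0: "lincomb G a Lam = (\<lambda>r. 0)"
  shows "a v = 0"
proof -
  have comb0: "Lam_comb a = (\<lambda>r. 0)" using lincomb_Lam_comb[OF G_subset_verts a_out] a0 by simp
  let ?z = "base_part a"
  have z: "?z \<in> relations m P\<beta>" using Lam_comb_zero_base_part[OF comb0] .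
  let ?x = "twist m D rows ?z"
  have x_out: "?x i = 0" if "i \<notin> F" for i
    using twist_base_part_outside_facet[OF a_out comb0 that] .
  have "lincomb F ?x (q \<alpha>) = (\<lambda>r. 0)"
  proof
    fix r
    have "(\<Sum>i\<in>F. ?x i * q \<alpha> i r) = (\<Sum>i=1..m. ?x i * q \<alpha> i r)"
      by (rule sum.mono_neutral_left) (use F_subset x_out in auto)
    then show "lincomb F ?x (q \<alpha>) r = 0"
      using relationsD[OF twist_in_relations[OF z]] unfolding lincomb_def by simp
  qed
  then have x0: "?x i = 0" for i using is_basis_independent[OF q\<alpha>_basis] x_out by blast
  have "(\<forall>i\<in>{1..m}-D. ?z i = 0) \<and> (\<forall>j\<in>D. (\<Sum>i=1..m. rows j i * ?z i) = 0)"
  proof (intro conjI ballI)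
    fix i assume "i \<in> {1..m} - D"
    then show "?z i = 0" using x0[of i] twist_off[of i m D rows ?z] by simp
  next
    fix j assume "j \<in> D"
    then show "(\<Sum>i=1..m. rows j i * ?z i) = 0"
      using x0[of j] twist_on[OF _ diff_coords_subset, of j m \<beta> \<alpha> rows ?z] by simp
  qed
  then have z0: "?z i = 0" for i
    using twist_injective_rows z unfolding twist_injective_def by blast
  show "a v = 0"
  proof (cases "v \<in> verts")
    case False then show ?thesis using a_out G_subset_verts by blast
  next
    case True
    show ?thesis
    proof (cases "v \<in> \<sigma>\<beta>")
      case True then show ?thesis using Lam_comb_zero_at[OF comb0] z0 by simp
    next
      case False
      then have "fst v \<in> {1..m}" "v = (fst v, \<beta> (fst v))" using notin_\<sigma>\<beta> \<open>v \<in> verts\<close> by auto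
      then show ?thesis using z0[of "fst v"] unfolding base_part_def by simp
    qed
  qed
qed

text \<open>Values of a relation of \<open>q \<alpha>\<close> on \<open>D - F\<close> can be prescribed: \<open>q \<alpha>\<close> restricted to \<open>F\<close> is a basis.\<close>

lemma relation_extension:
  obtains s where "(\<lambda>i. if i \<in> F then s i else if i \<in> D then t i else 0) \<in> relations m (q \<alpha>)"
proof -
  define v where "v = (\<lambda>r. - (\<Sum>i\<in>D - F. t i * q \<alpha> i r))"
  have "v \<in> vecs n"
    unfolding v_def using char_q[OF \<alpha>] diff_coords_subset[of m \<beta> \<alpha>] vecsD
    by (auto simp: vecs_def char_map_def intro!: sum.neutral)
  then obtain s where v: "v = lincomb F s (q \<alpha>)"
    using q\<alpha>_basis unfolding is_basis_def by blast
  define x where "x = (\<lambda>i. if i \<in> F then s i else if i \<in> D then t i else 0)"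
  have "(\<Sum>i=1..m. x i * q \<alpha> i r) = 0" for r
  proof -
    have "(\<Sum>i=1..m. x i * q \<alpha> i r)
        = (\<Sum>i=1..m. (if i \<in> F then s i * q \<alpha> i r else 0) + (if i \<in> D - F then t i * q \<alpha> i r else 0))"
      by (rule sum.cong) (auto simp: x_def)
    also have "\<dots> = (\<Sum>i=1..m. if i \<in> F then s i * q \<alpha> i r else 0)
        + (\<Sum>i=1..m. if i \<in> D - F then t i * q \<alpha> i r else 0)"
      by (rule sum.distrib)
    also have "(\<Sum>i=1..m. if i \<in> F then s i * q \<alpha> i r else 0) = (\<Sum>i\<in>F. s i * q \<alpha> i r)"
      by (rule sum_if_sub) (use F_subset in auto)
    also have "(\<Sum>i=1..m. if i \<in> D - F then t i * q \<alpha> i r else 0) = (\<Sum>i\<in>D - F. t i * q \<alpha> i r)"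
      by (rule sum_if_sub) (use diff_coords_subset[of m \<beta> \<alpha>] in auto)
    also have "(\<Sum>i\<in>F. s i * q \<alpha> i r) = - (\<Sum>i\<in>D - F. t i * q \<alpha> i r)"
      using fun_cong[OF v, of r] unfolding v_def lincomb_def by simp
    finally show ?thesis by simp
  qed
  moreover have "vanishes_outside m x"
    using F_subset diff_coords_subset[of m \<beta> \<alpha>] unfolding vanishes_outside_def x_def by auto
  ultimately have "x \<in> relations m (q \<alpha>)" unfolding relations_def by simp
  then show ?thesis using that unfolding x_def by blast
qed

lemma facet_spanning_base:
  assumes y: "y \<in> vecs N'"
  obtains z where "vanishes_outside m z" and "\<forall>i\<in>{1..m}. i \<notin> D \<union> F \<longrightarrow> z i = 0"
    and "\<forall>j\<in>D - F. (\<Sum>i=1..m. rows j i * z i) = y (idx (j, \<alpha> j))"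
    and "\<forall>r<n. y r = (\<Sum>i=1..m. z i * P\<beta> i r)"
proof -
  have "(\<lambda>r. if r < n then y r else 0) \<in> vecs n" unfolding vecs_def by auto
  then obtain d where d_out: "\<forall>i. i \<notin> F \<longrightarrow> d i = 0" and d: "(\<lambda>r. if r < n then y r else 0) = lincomb F d P\<beta>"
    using char_q[OF \<beta>] F unfolding char_map_def is_basis_def by blast
  define t where "t = (\<lambda>j. (\<Sum>i=1..m. rows j i * d i) - y (idx (j, \<alpha> j)))"
  obtain s where "(\<lambda>i. if i \<in> F then s i else if i \<in> D then t i else 0) \<in> relations m (q \<alpha>)"
    using relation_extension by blast
  then obtain w where w: "w \<in> relations m P\<beta>"
    and w_off: "\<forall>i\<in>{1..m}-D. (if i \<in> F then s i else if i \<in> D then t i else 0) = w i"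
    and w_on: "\<forall>j\<in>D. (if j \<in> F then s j else if j \<in> D then t j else 0) = - (\<Sum>i=1..m. rows j i * w i)"
    unfolding relations_q\<alpha> twisted_relations_def by blast
  show ?thesis
  proof
    show "vanishes_outside m (\<lambda>i. d i + w i)"
      using d_out F_subset relations_vanishes_outside[OF w] unfolding vanishes_outside_def by auto
    show "\<forall>i\<in>{1..m}. i \<notin> D \<union> F \<longrightarrow> d i + w i = 0"
    proof (intro ballI impI)
      fix i assume "i \<in> {1..m}" "i \<notin> D \<union> F"
      then show "d i + w i = 0" using w_off[rule_format, of i] d_out by simp
    qed
    show "\<forall>j\<in>D - F. (\<Sum>i=1..m. rows j i * (d i + w i)) = y (idx (j, \<alpha> j))"
    proof
      fix j assume j: "j \<in> D - F"
      then have "t j = - (\<Sum>i=1..m. rows j i * w i)" using w_on by auto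
      then show "(\<Sum>i=1..m. rows j i * (d i + w i)) = y (idx (j, \<alpha> j))"
        unfolding t_def by (simp add: distrib_left sum.distrib algebra_simps)
    qed
    show "\<forall>r<n. y r = (\<Sum>i=1..m. (d i + w i) * P\<beta> i r)"
    proof (intro allI impI)
      fix r assume "r < n"
      then have "y r = (\<Sum>i\<in>F. d i * P\<beta> i r)" using fun_cong[OF d, of r] by (simp add: lincomb_def)
      also have "\<dots> = (\<Sum>i=1..m. d i * P\<beta> i r)"
        by (rule sum.mono_neutral_left) (use F_subset d_out in auto)
      finally show "y r = (\<Sum>i=1..m. (d i + w i) * P\<beta> i r)"
        using relationsD[OF w, of r] by (simp add: distrib_right sum.distrib)
    qed
  qed
qed

lemma facet_spanning:
  assumes y: "y \<in> vecs N'"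
  shows "\<exists>a. (\<forall>v. v \<notin> G \<longrightarrow> a v = 0) \<and> y = lincomb G a Lam"
proof -
  obtain z where z_out: "vanishes_outside m z" and z0: "\<forall>i\<in>{1..m}. i \<notin> D \<union> F \<longrightarrow> z i = 0"
    and z_rows: "\<forall>j\<in>D - F. (\<Sum>i=1..m. rows j i * z i) = y (idx (j, \<alpha> j))"
    and z_low: "\<forall>r<n. y r = (\<Sum>i=1..m. z i * P\<beta> i r)"
    using facet_spanning_base[OF y] by blast
  define a where "a = (\<lambda>v. if v \<in> \<sigma>\<beta> then (if v \<in> G then y (idx v) - (\<Sum>i=1..m. coeff v i * z i) else 0)
                           else if v \<in> verts then z (fst v) else 0)"
  have base: "base_part a = z"
    using z_out graph_point_notin_sigma_face base_vertex_in_verts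
    unfolding base_part_def a_def vanishes_outside_def by fastforce
  have a_out: "\<forall>v. v \<notin> G \<longrightarrow> a v = 0"
    using notin_\<sigma>\<beta> base_vertex_in_G z0 unfolding a_def by (metis UnE)
  have "y = Lam_comb a"
  proof (rule Lam_comb_eqI[OF y])
    show "\<forall>r<n. y r = (\<Sum>i=1..m. base_part a i * P\<beta> i r)" using z_low base by simp
    show "\<forall>u\<in>\<sigma>\<beta>. y (idx u) = a u + (\<Sum>i=1..m. coeff u i * base_part a i)"
      using z_rows \<sigma>\<beta>_notin_G unfolding base by (auto simp: a_def coeff_at)
  qed
  then show ?thesis using a_out lincomb_Lam_comb[OF G_subset_verts a_out] by (intro exI[of _ a]) simp
qed

lemma Lam_facet_basis: "is_basis N' G Lam"
  unfolding is_basis_def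
proof (intro conjI ballI)
  show "finite G" using finite_subset[OF G_subset_verts finite_KJ_verts] .
  show "Lam v \<in> vecs N'" if "v \<in> G" for v using Lam_vecs G_subset_verts that by blast
  fix y :: "nat \<Rightarrow> 'r" assume "y \<in> vecs N'"
  then obtain a where a: "\<forall>v. v \<notin> G \<longrightarrow> a v = 0" "y = lincomb G a Lam" using facet_spanning by blast
  show "\<exists>!a. (\<forall>v. v \<notin> G \<longrightarrow> a v = 0) \<and> y = lincomb G a Lam"
  proof (rule ex1I[of _ a])
    fix a' assume a': "(\<forall>v. v \<notin> G \<longrightarrow> a' v = 0) \<and> y = lincomb G a' Lam"
    have eq: "lincomb G a' Lam = lincomb G a Lam" using a(2) a' by simp
    have "lincomb G (\<lambda>v. a' v - a v) Lam = (\<lambda>r. 0)"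
    proof
      fix r
      show "lincomb G (\<lambda>v. a' v - a v) Lam r = 0"
        using fun_cong[OF eq, of r] unfolding lincomb_def by (simp add: left_diff_distrib sum_subtractf)
    qed
    then have "a' v - a v = 0" for v using facet_independent[of "\<lambda>v. a' v - a v"] a a' by auto
    then show "a' = a" by auto
  qed (use a in blast)
qed

end

end

end

lemma realizable_if_normal_coeffs:
  fixes q :: "(nat \<Rightarrow> nat) \<Rightarrow> nat \<Rightarrow> nat \<Rightarrow> 'r::comm_ring_1"
  assumes pure: "pure_complex K m n" and J_pos: "\<forall>i\<in>{1..m}. 1 \<le> J i" and \<beta>: "\<beta> \<in> I_J m J"
    and chars: "\<forall>\<alpha>\<in>I_J m J. char_map K {1..m} n (q \<alpha>)"
    and normal: "normal_coeffs m J q \<beta> c"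
  shows "realizable K m n J q"
proof -
  have "card (sigma_face m J \<beta>) = card {n..<dimJ m n J}" using card_sigma_face[OF \<beta> J_pos] by simp
  then obtain idx where idx: "bij_betw idx (sigma_face m J \<beta>) {n..<dimJ m n J}"
    using bij_betw_iff_card[OF finite_sigma_face finite_atLeastLessThan] by blast
  interpret C: normal_realization K m n J \<beta> idx q c
    by unfold_locales (use pure J_pos \<beta> chars idx in auto)
  have "char_map (KJ K m J) (KJ_verts m J) (dimJ m n J) C.Lam"
    unfolding char_map_def
  proof (intro conjI ballI impI)
    show "C.Lam v \<in> vecs (dimJ m n J)" if "v \<in> KJ_verts m J" for v using C.Lam_vecs that .
    fix G assume "G \<in> KJ K m J" "card G = dimJ m n J"
    then obtain \<alpha> F where "\<alpha> \<in> I_J m J" "F \<in> K" "card F = n" "G = KJ_facet m J \<alpha> F"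
      using KJ_facet_classification[OF pure J_pos] by blast
    then show "is_basis (dimJ m n J) G C.Lam" using C.Lam_facet_basis normal by blast
  qed
  then interpret KJ_char_map K m n J C.Lam
    by unfold_locales (use pure J_pos in auto)
  show ?thesis
    using realizable_if_relations[OF chars] normal C.proj_relations_Lam unfolding normal_coeffs_def by simp
qed

section \<open>Subcubes\<close>

definition base_point :: "nat \<Rightarrow> nat \<Rightarrow> nat" where
  "base_point m = restrict (\<lambda>_. 1) {1..m}"

definition cube_emb :: "nat \<Rightarrow> (nat \<Rightarrow> nat set) \<Rightarrow> (nat \<Rightarrow> nat) \<Rightarrow> nat \<Rightarrow> nat" where
  "cube_emb m S \<gamma> = restrict (\<lambda>i. ord_emb (S i) (\<gamma> i)) {1..m}"

lemma subpuzzle_cube_emb: "subpuzzle m S p \<gamma> = p (cube_emb m S \<gamma>)"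
  unfolding subpuzzle_def cube_emb_def ..

lemma base_point_in_I_J: "\<forall>i\<in>{1..m}. 1 \<le> J i \<Longrightarrow> base_point m \<in> I_J m J"
  unfolding I_J_iff base_point_def by auto

lemma ord_emb_singleton: "ord_emb {1} 1 = 1"
  unfolding ord_emb_def by simp

lemma ord_emb_pair: "1 < (k::nat) \<Longrightarrow> ord_emb {1, k} 1 = 1 \<and> ord_emb {1, k} 2 = k"
  unfolding ord_emb_def by (simp add: sorted_list_of_set_insert)

lemma ord_emb_in: "finite S \<Longrightarrow> k \<in> {1..card S} \<Longrightarrow> ord_emb S k \<in> S"
proof -
  assume S: "finite S" "k \<in> {1..card S}"
  then have "k - 1 < length (sorted_list_of_set S)" by auto
  then have "sorted_list_of_set S ! (k - 1) \<in> set (sorted_list_of_set S)" by (rule nth_mem)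
  then show ?thesis unfolding ord_emb_def using S by simp
qed

lemma ord_emb_inj:
  "finite S \<Longrightarrow> k \<in> {1..card S} \<Longrightarrow> k' \<in> {1..card S} \<Longrightarrow> ord_emb S k = ord_emb S k' \<Longrightarrow> k = k'"
proof -
  assume S: "finite S" "k \<in> {1..card S}" "k' \<in> {1..card S}" "ord_emb S k = ord_emb S k'"
  have "k - 1 = k' - 1"
    using nth_eq_iff_index_eq[OF distinct_sorted_list_of_set, of "k - 1" S "k' - 1"] S
    unfolding ord_emb_def by auto
  then show "k = k'" using S by auto
qed

lemma cube_emb_in_I_J:
  assumes S: "\<forall>i\<in>{1..m}. S i \<subseteq> {1..J i}" and \<gamma>: "\<gamma> \<in> I_J m (\<lambda>i. card (S i))"
  shows "cube_emb m S \<gamma> \<in> I_J m J"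
proof -
  have "ord_emb (S i) (\<gamma> i) \<in> {1..J i}" if i: "i \<in> {1..m}" for i
    using ord_emb_in[OF finite_subset[OF bspec[OF S i]] I_J_mem[OF \<gamma> i]] bspec[OF S i] by blast
  then show ?thesis unfolding I_J_iff cube_emb_def by auto
qed

lemma diff_coords_cube_emb:
  assumes S: "\<forall>i\<in>{1..m}. S i \<subseteq> {1..J i}" and \<gamma>: "\<gamma> \<in> I_J m (\<lambda>i. card (S i))"
    and \<delta>: "\<delta> \<in> I_J m (\<lambda>i. card (S i))"
  shows "diff_coords m (cube_emb m S \<delta>) (cube_emb m S \<gamma>) = diff_coords m \<delta> \<gamma>"
  unfolding diff_coords_def cube_emb_def
  using ord_emb_inj[OF finite_subset[OF bspec[OF S]]] I_J_mem[OF \<gamma>] I_J_mem[OF \<delta>] by auto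

lemma twisted_relations_cong:
  assumes "\<forall>j\<in>D. \<forall>z\<in>relations m P. (\<Sum>i=1..m. f j i * z i) = (\<Sum>i=1..m. f' j i * z i)"
  shows "twisted_relations m P D f = twisted_relations m P D f'"
  unfolding twisted_relations_def using assms by (intro Collect_cong conj_cong refl bex_cong) simp_all

lemma twist_injective_cong:
  assumes "\<forall>j\<in>D. \<forall>z\<in>relations m P. (\<Sum>i=1..m. f j i * z i) = (\<Sum>i=1..m. f' j i * z i)"
  shows "twist_injective m P D f = twist_injective m P D f'"
  unfolding twist_injective_def using assms by (intro ball_cong refl) simp

lemma normal_coeffs_subpuzzle:
  assumes S: "\<forall>i\<in>{1..m}. S i \<noteq> {} \<and> S i \<subseteq> {1..J i}"
    and normal: "normal_coeffs m J p (cube_emb m S (base_point m)) c"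
  shows "normal_coeffs m (\<lambda>i. card (S i)) (subpuzzle m S p) (base_point m) (\<lambda>j k. c j (ord_emb (S j) k))"
  unfolding normal_coeffs_def
proof
  let ?J' = "\<lambda>i. card (S i)"
  fix \<gamma> assume \<gamma>: "\<gamma> \<in> I_J m ?J'"
  have S': "\<forall>i\<in>{1..m}. S i \<subseteq> {1..J i}" using S by blast
  have base: "base_point m \<in> I_J m ?J'"
    using S finite_subset by (intro base_point_in_I_J) (fastforce simp: Suc_le_eq card_gt_0_iff)
  have D: "diff_coords m (cube_emb m S (base_point m)) (cube_emb m S \<gamma>) = diff_coords m (base_point m) \<gamma>"
    using diff_coords_cube_emb[OF S' \<gamma> base] .
  let ?P = "p (cube_emb m S (base_point m))"
  have rows: "\<forall>j\<in>diff_coords m (base_point m) \<gamma>. \<forall>z\<in>relations m ?P.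
      (\<Sum>i=1..m. c j (cube_emb m S \<gamma> j) i * z i) = (\<Sum>i=1..m. c j (ord_emb (S j) (\<gamma> j)) i * z i)"
    unfolding diff_coords_def cube_emb_def by simp
  have "relations m (p (cube_emb m S \<gamma>))
      = twisted_relations m ?P (diff_coords m (base_point m) \<gamma>) (\<lambda>j. c j (cube_emb m S \<gamma> j)) \<and>
    twist_injective m ?P (diff_coords m (base_point m) \<gamma>) (\<lambda>j. c j (cube_emb m S \<gamma> j))"
    using normal cube_emb_in_I_J[OF S' \<gamma>] unfolding normal_coeffs_def D[symmetric] by blast
  then show "relations m (subpuzzle m S p \<gamma>)
      = twisted_relations m (subpuzzle m S p (base_point m)) (diff_coords m (base_point m) \<gamma>) (\<lambda>j. c j (ord_emb (S j) (\<gamma> j))) \<and>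
    twist_injective m (subpuzzle m S p (base_point m)) (diff_coords m (base_point m) \<gamma>) (\<lambda>j. c j (ord_emb (S j) (\<gamma> j)))"
    unfolding subpuzzle_cube_emb twisted_relations_cong[OF rows] twist_injective_cong[OF rows] .
qed

lemma realizable_subpuzzle:
  fixes p :: "(nat \<Rightarrow> nat) \<Rightarrow> nat \<Rightarrow> nat \<Rightarrow> 'r::comm_ring_1"
  assumes pure: "pure_complex K m n" and J_pos: "\<forall>i\<in>{1..m}. 1 \<le> J i"
    and chars: "\<forall>\<alpha>\<in>I_J m J. char_map K {1..m} n (p \<alpha>)" and R: "realizable K m n J p"
    and S: "\<forall>i\<in>{1..m}. S i \<noteq> {} \<and> S i \<subseteq> {1..J i}"
  shows "realizable K m n (\<lambda>i. card (S i)) (subpuzzle m S p)"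
proof -
  have S': "\<forall>i\<in>{1..m}. S i \<subseteq> {1..J i}" using S by blast
  have J'_pos: "\<forall>i\<in>{1..m}. 1 \<le> card (S i)"
    using S finite_subset by (fastforce simp: Suc_le_eq card_gt_0_iff)
  have \<beta>: "cube_emb m S (base_point m) \<in> I_J m J"
    using cube_emb_in_I_J[OF S' base_point_in_I_J[OF J'_pos]] .
  obtain \<Lambda> where "KJ_char_map K m n J \<Lambda>" "\<forall>\<alpha>\<in>I_J m J. relations m (p \<alpha>) = proj_relations m J \<Lambda> \<alpha>"
    using realizable_relations[OF pure J_pos R] by blast
  then obtain c where "normal_coeffs m J p (cube_emb m S (base_point m)) c"
    using KJ_char_map.normal_coeffs_of_realization[OF _ \<beta>] by blast
  moreover have "\<forall>\<gamma>\<in>I_J m (\<lambda>i. card (S i)). char_map K {1..m} n (subpuzzle m S p \<gamma>)"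
    using chars cube_emb_in_I_J[OF S'] by (simp add: subpuzzle_cube_emb)
  ultimately show ?thesis
    using realizable_if_normal_coeffs[OF pure J'_pos base_point_in_I_J[OF J'_pos]] normal_coeffs_subpuzzle[OF S]
    by blast
qed

text \<open>The row of \<open>j\<close> is determined, on the relations of \<open>P\<close>, by the twisted relations along \<open>j\<close>
  alone: two relations of \<open>P\<close> giving the same twisted relation differ by a multiple of the
  single vector \<open>P j\<close>, which is part of a basis.\<close>

lemma twisted_relations_singleton_rows_eq:
  fixes P :: "nat \<Rightarrow> nat \<Rightarrow> 'r::comm_ring_1"
  assumes pure: "pure_complex K m n" and P: "char_map K {1..m} n P" and j: "j \<in> {1..m}"
    and eq: "twisted_relations m P {j} f = twisted_relations m P {j} f'" and z: "z \<in> relations m P"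
  shows "(\<Sum>i=1..m. f j i * z i) = (\<Sum>i=1..m. f' j i * z i)"
proof -
  have "twist m {j} f z \<in> twisted_relations m P {j} f'"
    using twist_in_twisted_relations[of "{j}" m z P f] j z eq by simp
  then obtain z' where z': "z' \<in> relations m P" and off: "\<forall>i\<in>{1..m}-{j}. twist m {j} f z i = z' i"
    and on: "twist m {j} f z j = - (\<Sum>i=1..m. f' j i * z' i)" unfolding twisted_relations_def by blast
  have off': "z i = z' i" if "i \<in> {1..m}" "i \<noteq> j" for i using off that twist_off[of i m "{j}" f z] by simp
  obtain F where F: "F \<in> K" "{j} \<subseteq> F" "card F = n"
    using pure_complex_facet[OF pure pure_complex_singleton[OF pure j]] by blast
  have basis: "is_basis n F P" using P F unfolding char_map_def by blast
  have "(z j - z' j) * P j r = 0" for r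
  proof -
    have "(\<Sum>i=1..m. (z i - z' i) * P i r) = 0"
      using relationsD[OF z, of r] relationsD[OF z', of r] by (simp add: left_diff_distrib sum_subtractf)
    moreover have "(\<Sum>i=1..m. (z i - z' i) * P i r) = (z j - z' j) * P j r"
    proof -
      have "(\<Sum>i\<in>{1..m} - {j}. (z i - z' i) * P i r) = 0" using off' by (auto intro!: sum.neutral)
      then show ?thesis using j by (simp add: sum.remove)
    qed
    ultimately show ?thesis by simp
  qed
  then have "lincomb F (\<lambda>i. if i = j then z j - z' j else 0) P = (\<lambda>r. 0)"
    using F(2) is_basis_finite[OF basis] unfolding lincomb_def
    by (simp add: if_distrib[of "\<lambda>x. x * _"] cong: if_cong)
  then have "z j - z' j = 0"
    using is_basis_independent[OF basis, of "\<lambda>i. if i = j then z j - z' j else 0" j] F(2) by simp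
  then have "z j = z' j" by simp
  then have "z i = z' i" if "i \<in> {1..m}" for i using off' that by (cases "i = j") auto
  then have "(\<Sum>i=1..m. f' j i * z' i) = (\<Sum>i=1..m. f' j i * z i)" by (intro sum.cong) auto
  then show ?thesis using on twist_on[of j "{j}" m f z] j by simp
qed

definition corner_cube :: "(nat \<Rightarrow> nat) \<Rightarrow> nat \<Rightarrow> nat set" where
  "corner_cube \<alpha> i = (if \<alpha> i = 1 then {1} else {1, \<alpha> i})"

definition corner :: "nat \<Rightarrow> (nat \<Rightarrow> nat) \<Rightarrow> nat \<Rightarrow> nat" where
  "corner m \<alpha> = restrict (\<lambda>i. if \<alpha> i = 1 then 1 else 2) {1..m}"

context
  fixes m :: nat and J \<alpha> :: "nat \<Rightarrow> nat"
  assumes \<alpha>: "\<alpha> \<in> I_J m J"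
begin

lemma corner_cube_admissible:
  assumes "i \<in> {1..m}"
  shows "corner_cube \<alpha> i \<noteq> {} \<and> corner_cube \<alpha> i \<subseteq> {1..J i} \<and> card (corner_cube \<alpha> i) \<le> 2"
proof -
  have "1 \<le> \<alpha> i" "\<alpha> i \<le> J i" using I_J_mem[OF \<alpha> assms] by auto
  then show ?thesis unfolding corner_cube_def by (auto simp: card_insert_if)
qed

lemma card_corner_cube: "i \<in> {1..m} \<Longrightarrow> card (corner_cube \<alpha> i) = (if \<alpha> i = 1 then 1 else 2)"
  using I_J_mem[OF \<alpha>] unfolding corner_cube_def by auto

lemma ord_emb_corner_cube:
  assumes "i \<in> {1..m}"
  shows "ord_emb (corner_cube \<alpha> i) 1 = 1 \<and> (\<alpha> i \<noteq> 1 \<longrightarrow> ord_emb (corner_cube \<alpha> i) 2 = \<alpha> i)"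
proof (cases "\<alpha> i = 1")
  case False
  then have "1 < \<alpha> i" using I_J_mem[OF \<alpha> assms] by auto
  then show ?thesis using False ord_emb_pair[of "\<alpha> i"] unfolding corner_cube_def by simp
qed (use ord_emb_singleton in \<open>simp add: corner_cube_def\<close>)

lemma corner_in_I_J: "corner m \<alpha> \<in> I_J m (\<lambda>i. card (corner_cube \<alpha> i))"
  unfolding I_J_iff corner_def by (auto simp: card_corner_cube)

lemma base_point_in_corner_cube: "base_point m \<in> I_J m (\<lambda>i. card (corner_cube \<alpha> i))"
  by (rule base_point_in_I_J) (simp add: card_corner_cube)

lemma cube_emb_corner: "cube_emb m (corner_cube \<alpha>) (corner m \<alpha>) = \<alpha>"
  using ord_emb_corner_cube I_J_out[OF \<alpha>] unfolding cube_emb_def corner_def by (auto intro!: ext)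

lemma edge_in_corner_cube:
  "j \<in> {1..m} \<Longrightarrow> \<alpha> j \<noteq> 1 \<Longrightarrow> (base_point m)(j := 2) \<in> I_J m (\<lambda>i. card (corner_cube \<alpha> i))"
  unfolding I_J_iff base_point_def by (auto simp: card_corner_cube)

lemma cube_emb_edge:
  "j \<in> {1..m} \<Longrightarrow> \<alpha> j \<noteq> 1 \<Longrightarrow> cube_emb m (corner_cube \<alpha>) ((base_point m)(j := 2)) = (base_point m)(j := \<alpha> j)"
  using ord_emb_corner_cube unfolding cube_emb_def base_point_def by (auto intro!: ext)

lemma cube_emb_base_point: "cube_emb m (corner_cube \<alpha>) (base_point m) = base_point m"
  using ord_emb_corner_cube unfolding cube_emb_def base_point_def by (auto intro!: ext)

end

context
  fixes K :: "nat set set" and m n :: nat and J :: "nat \<Rightarrow> nat"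
    and p :: "(nat \<Rightarrow> nat) \<Rightarrow> nat \<Rightarrow> nat \<Rightarrow> 'r::comm_ring_1"
    and C :: "(nat \<Rightarrow> nat) \<Rightarrow> nat \<Rightarrow> nat \<Rightarrow> nat \<Rightarrow> 'r"
  assumes pure: "pure_complex K m n" and J_pos: "\<forall>i\<in>{1..m}. 1 \<le> J i"
    and chars: "\<forall>\<alpha>\<in>I_J m J. char_map K {1..m} n (p \<alpha>)"
    and C: "\<And>\<alpha>. \<alpha> \<in> I_J m J \<Longrightarrow>
      normal_coeffs m (\<lambda>i. card (corner_cube \<alpha> i)) (subpuzzle m (corner_cube \<alpha>) p) (base_point m) (C \<alpha>)"
begin

lemma corner_cube_relations:
  assumes "\<alpha> \<in> I_J m J" "\<gamma> \<in> I_J m (\<lambda>i. card (corner_cube \<alpha> i))"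
  shows "relations m (p (cube_emb m (corner_cube \<alpha>) \<gamma>))
      = twisted_relations m (p (base_point m)) (diff_coords m (base_point m) \<gamma>) (\<lambda>j. C \<alpha> j (\<gamma> j)) \<and>
    twist_injective m (p (base_point m)) (diff_coords m (base_point m) \<gamma>) (\<lambda>j. C \<alpha> j (\<gamma> j))"
  using C[OF assms(1), unfolded normal_coeffs_def, rule_format, OF assms(2)]
  unfolding subpuzzle_cube_emb cube_emb_base_point[OF assms(1)] .

text \<open>The subcubes of \<open>\<alpha>\<close> and of \<open>base_point(j := \<alpha> j)\<close> share the edge in direction \<open>j\<close>.\<close>

lemma corner_cube_rows_agree:
  assumes \<alpha>: "\<alpha> \<in> I_J m J" and j: "j \<in> diff_coords m (base_point m) \<alpha>" and z: "z \<in> relations m (p (base_point m))"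
  shows "(\<Sum>i=1..m. C \<alpha> j 2 i * z i) = (\<Sum>i=1..m. C ((base_point m)(j := \<alpha> j)) j 2 i * z i)"
proof -
  let ?o = "base_point m"
  let ?\<alpha>j = "?o(j := \<alpha> j)"
  have o: "?o \<in> I_J m J" using base_point_in_I_J[OF J_pos] .
  have jm: "j \<in> {1..m}" and "\<alpha> j \<noteq> 1" using j unfolding diff_coords_def base_point_def by auto
  have \<alpha>j: "?\<alpha>j \<in> I_J m J" "?\<alpha>j j \<noteq> 1"
    using o I_J_mem[OF \<alpha> jm] jm \<open>\<alpha> j \<noteq> 1\<close> unfolding I_J_iff by auto
  have D: "diff_coords m ?o (?o(j := 2)) = {j}"
    using jm unfolding diff_coords_def base_point_def by auto
  have emb_\<alpha>j: "cube_emb m (corner_cube ?\<alpha>j) (?o(j := 2)) = ?\<alpha>j"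
    using cube_emb_edge[OF \<alpha>j(1) jm \<alpha>j(2)] by (simp only: fun_upd_same)
  have "relations m (p ?\<alpha>j) = twisted_relations m (p ?o) {j} (\<lambda>j'. C \<alpha> j' ((?o(j := 2)) j'))"
    using corner_cube_relations[OF \<alpha> edge_in_corner_cube[OF \<alpha> jm \<open>\<alpha> j \<noteq> 1\<close>]]
    unfolding cube_emb_edge[OF \<alpha> jm \<open>\<alpha> j \<noteq> 1\<close>] D by (rule conjunct1)
  moreover have "relations m (p ?\<alpha>j) = twisted_relations m (p ?o) {j} (\<lambda>j'. C ?\<alpha>j j' ((?o(j := 2)) j'))"
    using corner_cube_relations[OF \<alpha>j(1) edge_in_corner_cube[OF \<alpha>j(1) jm \<alpha>j(2)]]
    unfolding emb_\<alpha>j D by (rule conjunct1)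
  ultimately have "twisted_relations m (p ?o) {j} (\<lambda>j'. C \<alpha> j' ((?o(j := 2)) j'))
      = twisted_relations m (p ?o) {j} (\<lambda>j'. C ?\<alpha>j j' ((?o(j := 2)) j'))"
    by (rule trans[OF sym])
  from twisted_relations_singleton_rows_eq[OF pure bspec[OF chars o] jm this z]
  show ?thesis by simp
qed

lemma normal_coeffs_glued: "normal_coeffs m J p (base_point m) (\<lambda>j k. C ((base_point m)(j := k)) j 2)"
  unfolding normal_coeffs_def
proof
  let ?o = "base_point m" and ?c = "\<lambda>j k. C ((base_point m)(j := k)) j 2"
  fix \<alpha> assume \<alpha>: "\<alpha> \<in> I_J m J"
  have D: "diff_coords m ?o (corner m \<alpha>) = diff_coords m ?o \<alpha>"
    unfolding diff_coords_def base_point_def corner_def by auto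
  have rows: "\<forall>j\<in>diff_coords m ?o \<alpha>. \<forall>z\<in>relations m (p ?o).
      (\<Sum>i=1..m. C \<alpha> j (corner m \<alpha> j) i * z i) = (\<Sum>i=1..m. ?c j (\<alpha> j) i * z i)"
    using corner_cube_rows_agree[OF \<alpha>] unfolding diff_coords_def corner_def base_point_def by auto
  show "relations m (p \<alpha>) = twisted_relations m (p ?o) (diff_coords m ?o \<alpha>) (\<lambda>j. ?c j (\<alpha> j)) \<and>
    twist_injective m (p ?o) (diff_coords m ?o \<alpha>) (\<lambda>j. ?c j (\<alpha> j))"
    using corner_cube_relations[OF \<alpha> corner_in_I_J[OF \<alpha>]] twisted_relations_cong[OF rows] twist_injective_cong[OF rows]
    unfolding cube_emb_corner[OF \<alpha>] D by simp
qed

end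

lemma realizable_if_subcubes_realizable:
  fixes p :: "(nat \<Rightarrow> nat) \<Rightarrow> nat \<Rightarrow> nat \<Rightarrow> 'r::comm_ring_1"
  assumes pure: "pure_complex K m n" and J_pos: "\<forall>i\<in>{1..m}. 1 \<le> J i"
    and chars: "\<forall>\<alpha>\<in>I_J m J. char_map K {1..m} n (p \<alpha>)"
    and subcubes: "\<forall>S. (\<forall>i\<in>{1..m}. S i \<noteq> {} \<and> S i \<subseteq> {1..J i} \<and> card (S i) \<le> 2) \<longrightarrow>
              realizable K m n (\<lambda>i. card (S i)) (subpuzzle m S p)"
  shows "realizable K m n J p"
proof -
  let ?J = "\<lambda>\<alpha> i. card (corner_cube \<alpha> i)"
  have "\<exists>c. normal_coeffs m (?J \<alpha>) (subpuzzle m (corner_cube \<alpha>) p) (base_point m) c" if \<alpha>: "\<alpha> \<in> I_J m J" for \<alpha>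
  proof -
    have J_pos': "\<forall>i\<in>{1..m}. 1 \<le> ?J \<alpha> i" using card_corner_cube[OF \<alpha>] by simp
    have "realizable K m n (?J \<alpha>) (subpuzzle m (corner_cube \<alpha>) p)"
      using subcubes[rule_format, of "corner_cube \<alpha>"] corner_cube_admissible[OF \<alpha>] by blast
    then obtain \<Lambda> where "KJ_char_map K m n (?J \<alpha>) \<Lambda>"
      "\<forall>\<gamma>\<in>I_J m (?J \<alpha>). relations m (subpuzzle m (corner_cube \<alpha>) p \<gamma>) = proj_relations m (?J \<alpha>) \<Lambda> \<gamma>"
      using realizable_relations[OF pure J_pos'] by blast
    then show ?thesis using KJ_char_map.normal_coeffs_of_realization base_point_in_corner_cube[OF \<alpha>] by blast
  qed
  then obtain C where "\<And>\<alpha>. \<alpha> \<in> I_J m J \<Longrightarrow> normal_coeffs m (?J \<alpha>) (subpuzzle m (corner_cube \<alpha>) p) (base_point m) (C \<alpha>)"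
    by (metis someI_ex)
  then show ?thesis
    using realizable_if_normal_coeffs[OF pure J_pos base_point_in_I_J[OF J_pos] chars] normal_coeffs_glued[OF pure J_pos chars]
    by blast
qed

lemma realizable_iff_subcubes_realizable:
  fixes p :: "(nat \<Rightarrow> nat) \<Rightarrow> nat \<Rightarrow> nat \<Rightarrow> 'r::comm_ring_1"
  assumes "star_shaped_sphere m n K" "\<forall>i\<in>{1..m}. 1 \<le> J i" "puzzle K m n J p"
  shows "realizable K m n J p \<longleftrightarrow>
     (\<forall>S. (\<forall>i\<in>{1..m}. S i \<noteq> {} \<and> S i \<subseteq> {1..J i} \<and> card (S i) \<le> 2) \<longrightarrow>
          realizable K m n (\<lambda>i. card (S i)) (subpuzzle m S p))"
proof -
  have pure: "pure_complex K m n" using star_shaped_sphere_pure[OF assms(1)] .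
  have chars: "\<forall>\<alpha>\<in>I_J m J. char_map K {1..m} n (p \<alpha>)" using assms(3) unfolding puzzle_def by blast
  show ?thesis
  proof (intro iffI allI impI)
    fix S assume "realizable K m n J p" "\<forall>i\<in>{1..m}. S i \<noteq> {} \<and> S i \<subseteq> {1..J i} \<and> card (S i) \<le> 2"
    then show "realizable K m n (\<lambda>i. card (S i)) (subpuzzle m S p)"
      using realizable_subpuzzle[OF pure assms(2) chars] by blast
  qed (rule realizable_if_subcubes_realizable[OF pure assms(2) chars])
qed

theorem mainTheorem8:
  shows "(\<forall>(K::nat set set) m n J (p :: (nat \<Rightarrow> nat) \<Rightarrow> nat \<Rightarrow> nat \<Rightarrow> int).
            star_shaped_sphere m n K \<longrightarrow> (\<forall>i\<in>{1..m}. 1 \<le> J i) \<longrightarrow> puzzle K m n J p \<longrightarrow>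
            (realizable K m n J p \<longleftrightarrow>
              (\<forall>S. (\<forall>i\<in>{1..m}. S i \<noteq> {} \<and> S i \<subseteq> {1..J i} \<and> card (S i) \<le> 2) \<longrightarrow>
                   realizable K m n (\<lambda>i. card (S i)) (subpuzzle m S p))))
       \<and> (\<forall>(K::nat set set) m n J (p :: (nat \<Rightarrow> nat) \<Rightarrow> nat \<Rightarrow> nat \<Rightarrow> bit).
            star_shaped_sphere m n K \<longrightarrow> (\<forall>i\<in>{1..m}. 1 \<le> J i) \<longrightarrow> puzzle K m n J p \<longrightarrow>
            (realizable K m n J p \<longleftrightarrow>
              (\<forall>S. (\<forall>i\<in>{1..m}. S i \<noteq> {} \<and> S i \<subseteq> {1..J i} \<and> card (S i) \<le> 2) \<longrightarrow>
                   realizable K m n (\<lambda>i. card (S i)) (subpuzzle m S p))))"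
  by (intro conjI allI impI realizable_iff_subcubes_realizable)

end
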